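(* Let $E$ be a Banach space, $T\colon\ell^1\to E$ a continuous linear operator with $T(e_n)\neq0$ for all $n$, and $0<r<\infty$. Then $\ell^1(m_T)\subset\ell^r(m_T)$ if and only if $T$ is $r$-power dominated, i.e. there exists $C>0$ such that $$\Big\|\sum_{j\in F}x_j^r\,T(e_j)\Big\|_E^{1/r}\le C\sup_{N\subset F}\Big\|\sum_{j\in N}x_jT(e_j)\Big\|_E$$ for every finite $F\subset\mathbb N$ and every $(x_j)_{j\in F}\subset[0,\infty)$.
   Context: $e_n=\chi_{\{n\}}$; $\ell^0$ is the space of all real sequences, $\mathcal P_F(\mathbb N)$ the $\delta$-ring of finite subsets of $\mathbb N$. $m_T\colon\mathcal P_F(\mathbb N)\to E$, $m_T(A)=T(\chi_A)=\sum_{j\in A}T(e_j)$, is a vector measure whose only null set is $\emptyset$. For $x^*\in E^*$, $|x^*m_T|$ is the variation measure of $x^*\circ m_T$ on $\mathcal P(\mathbb N)$. $\ell^1(m_T)$ is the set of sequences $x\in\ell^0$ with $x\in L^1(|x^*m_T|)$ for every $x^*\in E^*$ and such that for each $A\subset\mathbb N$ there is $\int_Ax\,dm_T\in E$ with $x^*(\int_Ax\,dm_T)=\int_Ax\,dx^*m_T$ for all $x^*$. For $r\in(0,\infty)$, $\ell^r(m_T)=\{x\in\ell^0:|x|^r\in\ell^1(m_T)\}$. *)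

theory Defs
  imports "HOL-Analysis.Analysis"
begin

definition ell1 :: "(nat \<Rightarrow> real) set" where
  "ell1 = {x. summable (\<lambda>n. \<bar>x n\<bar>)}"

definition unitseq :: "nat \<Rightarrow> nat \<Rightarrow> real" where
  "unitseq n = (\<lambda>k. if k = n then 1 else 0)"

text \<open>T : ell^1 -> E is a continuous (bounded) linear operator; only values on ell^1 matter.\<close>
definition bounded_linear_on_ell1 :: "((nat \<Rightarrow> real) \<Rightarrow> 'e::real_normed_vector) \<Rightarrow> bool" where
  "bounded_linear_on_ell1 T \<longleftrightarrow>
     (\<forall>x\<in>ell1. \<forall>y\<in>ell1. T (\<lambda>n. x n + y n) = T x + T y) \<and>
     (\<forall>x\<in>ell1. \<forall>c. T (\<lambda>n. c * x n) = c *\<^sub>R T x) \<and>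
     (\<exists>K. \<forall>x\<in>ell1. norm (T x) \<le> K * (\<Sum>n. \<bar>x n\<bar>))"

text \<open>Variation measure |x* m_T| on P(N): the counting measure with density |x*(T e_j)|.\<close>
definition var_meas :: "((nat \<Rightarrow> real) \<Rightarrow> 'e::real_normed_vector) \<Rightarrow> ('e \<Rightarrow> real) \<Rightarrow> nat measure" where
  "var_meas T x' = density (count_space UNIV) (\<lambda>j. ennreal \<bar>x' (T (unitseq j))\<bar>)"

text \<open>Integral over A of x with respect to the scalar measure x* m_T (point masses x*(T e_j)).\<close>
definition scal_int :: "((nat \<Rightarrow> real) \<Rightarrow> 'e::real_normed_vector) \<Rightarrow> ('e \<Rightarrow> real) \<Rightarrow> nat set \<Rightarrow> (nat \<Rightarrow> real) \<Rightarrow> real" where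
  "scal_int T x' A x = (LINT j|count_space UNIV. indicator A j * (x j * x' (T (unitseq j))))"

definition ell1_mT :: "((nat \<Rightarrow> real) \<Rightarrow> 'e::real_normed_vector) \<Rightarrow> (nat \<Rightarrow> real) set" where
  "ell1_mT T = {x. (\<forall>x'. bounded_linear x' \<longrightarrow> integrable (var_meas T x') x) \<and>
      (\<forall>A. \<exists>v::'e. \<forall>x'. bounded_linear x' \<longrightarrow> x' v = scal_int T x' A x)}"

definition ellr_mT :: "((nat \<Rightarrow> real) \<Rightarrow> 'e::real_normed_vector) \<Rightarrow> real \<Rightarrow> (nat \<Rightarrow> real) set" where
  "ellr_mT T r = {x. (\<lambda>j. \<bar>x j\<bar> powr r) \<in> ell1_mT T}"

definition r_power_dominated :: "((nat \<Rightarrow> real) \<Rightarrow> 'e::real_normed_vector) \<Rightarrow> real \<Rightarrow> bool" where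
  "r_power_dominated T r \<longleftrightarrow> (\<exists>C>0. \<forall>F x. finite F \<longrightarrow> (\<forall>j\<in>F. x j \<ge> (0::real)) \<longrightarrow>
      norm (\<Sum>j\<in>F. (x j powr r) *\<^sub>R T (unitseq j)) powr (1 / r)
        \<le> C * (SUP N\<in>Pow F. norm (\<Sum>j\<in>N. x j *\<^sub>R T (unitseq j))))"

end

(*
  A sequence x lies in ell^1(m_T) exactly when the series sum_j x_j T(e_j) is weakly subseries
  summable: every functional sums it absolutely, and every subseries has a weak sum in E.  By the
  Orlicz-Pettis theorem, which follows from the Hahn-Banach theorem and a gliding-hump variant of
  Phillips' lemma, this means that the series is unconditionally Cauchy in norm: its sums over
  finite index sets beyond n tend to 0.  Power domination bounds these sums for |x|^r by those for
  |x|, which gives the inclusion.  Conversely, if T is not r-power dominated, then beyond any index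
  there are finite blocks whose subset sums are at most 2^-k while the r-th power sum has norm at
  least 1; gluing such blocks gives an x in ell^1(m_T) with |x|^r not in ell^1(m_T).
*)

theory Submission
  imports Defs "HOL-Library.Diagonal_Subsequence"
begin

section \<open>The Hahn--Banach theorem\<close>

definition sublinear :: "('a::real_vector \<Rightarrow> real) \<Rightarrow> bool" where
  "sublinear p \<longleftrightarrow> (\<forall>x y. p (x + y) \<le> p x + p y) \<and> (\<forall>t x. 0 < t \<longrightarrow> p (t *\<^sub>R x) = t * p x)"

lemma sublinearD:
  assumes "sublinear p"
  shows "p (x + y) \<le> p x + p y" and "0 < t \<Longrightarrow> p (t *\<^sub>R x) = t * p x"
  using assms unfolding sublinear_def by blast+

lemma sublinear_zero: "sublinear p \<Longrightarrow> p 0 = 0"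
  using sublinearD(2)[of p 2 0] by simp

text \<open>Partial linear functionals are encoded by their graphs, so that Zorn's lemma applies to set
  inclusion.\<close>
definition dominated_graph :: "('a::real_vector \<Rightarrow> real) \<Rightarrow> ('a \<times> real) set \<Rightarrow> bool" where
  "dominated_graph p G \<longleftrightarrow> subspace G \<and> (\<forall>x y y'. (x, y) \<in> G \<longrightarrow> (x, y') \<in> G \<longrightarrow> y = y') \<and>
     (\<forall>(x, y) \<in> G. y \<le> p x)"

lemma dominated_graph_extension_bound:
  assumes p: "sublinear p" and G: "dominated_graph p G"
  shows "\<exists>d. \<forall>(x, y) \<in> G. y - p (x - a) \<le> d \<and> d \<le> p (x + a) - y"
proof -
  have key: "y - p (x - a) \<le> p (x' + a) - y'" if "(x, y) \<in> G" "(x', y') \<in> G" for x y x' y'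
  proof -
    have "(x + x', y + y') \<in> G"
      using G that subspace_add[of G "(x, y)" "(x', y')"] unfolding dominated_graph_def by auto
    then have "y + y' \<le> p ((x - a) + (x' + a))"
      using G unfolding dominated_graph_def by auto
    also have "\<dots> \<le> p (x - a) + p (x' + a)" using sublinearD(1)[OF p] .
    finally show ?thesis by simp
  qed
  define S where "S = {y - p (x - a) | x y. (x, y) \<in> G}"
  have "(0, 0) \<in> G" using G subspace_0[of G] unfolding dominated_graph_def by (simp add: zero_prod_def)
  then have "S \<noteq> {}" and "bdd_above S"
    unfolding S_def bdd_above_def using key[of _ _ 0 0] by blast+
  then have "y - p (x - a) \<le> Sup S \<and> Sup S \<le> p (x + a) - y" if "(x, y) \<in> G" for x y
    using that key unfolding S_def by (auto intro!: cSup_upper cSup_least)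
  then show ?thesis by blast
qed

lemma subspace_graph_shift_unique:
  assumes sub: "subspace G" and a: "a \<notin> fst ` G" and G: "(x1, y1) \<in> G" "(x2, y2) \<in> G"
    and eq: "x1 + t *\<^sub>R a = x2 + t' *\<^sub>R a"
  shows "t = t'"
proof (rule ccontr)
  assume "t \<noteq> t'"
  have "(1 / (t - t')) *\<^sub>R ((x2, y2) - (x1, y1)) \<in> G"
    using subspace_scale[OF sub subspace_diff[OF sub G(2,1)], of "1 / (t - t')"] by simp
  moreover have "x2 - x1 = (t - t') *\<^sub>R a" using eq by (simp add: algebra_simps)
  then have "(1 / (t - t')) *\<^sub>R (x2 - x1) = a" using \<open>t \<noteq> t'\<close> by simp
  ultimately show False using a by force
qed

lemma dominated_graph_shift_le:
  assumes p: "sublinear p" and G: "dominated_graph p G" and xy: "(x, y) \<in> G"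
    and d: "\<forall>(x, y) \<in> G. y - p (x - a) \<le> d \<and> d \<le> p (x + a) - y"
  shows "y + t * d \<le> p (x + t *\<^sub>R a)"
proof -
  have "subspace G" using G unfolding dominated_graph_def by blast
  from subspace_scale[OF this xy] have scaled: "((1 / s) *\<^sub>R x, (1 / s) * y) \<in> G" for s
    by (metis scaleR_Pair real_scaleR_def)
  consider "t = 0" | "t > 0" | "t < 0" by linarith
  then show ?thesis
  proof cases
    case 1
    then show ?thesis using G xy unfolding dominated_graph_def by auto
  next
    case 2
    have "d \<le> p ((1 / t) *\<^sub>R x + a) - y / t" using d scaled[of t] by auto
    then have "y + t * d \<le> t * p ((1 / t) *\<^sub>R x + a)" using 2 by (simp add: field_simps)
    also have "\<dots> = p (x + t *\<^sub>R a)"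
      using sublinearD(2)[OF p 2, of "(1 / t) *\<^sub>R x + a"] 2 by (simp add: algebra_simps)
    finally show ?thesis .
  next
    case 3
    have "y / (- t) - p ((1 / (- t)) *\<^sub>R x - a) \<le> d" using d scaled[of "- t"] by auto
    then have "y - (- t) * p ((1 / (- t)) *\<^sub>R x - a) \<le> - t * d" using 3 by (simp add: field_simps)
    moreover have "(- t) * p ((1 / (- t)) *\<^sub>R x - a) = p (x + t *\<^sub>R a)"
      using sublinearD(2)[OF p, of "- t" "(1 / (- t)) *\<^sub>R x - a"] 3 by (simp add: algebra_simps)
    ultimately show ?thesis by simp
  qed
qed

lemma dominated_graph_extend_by:
  assumes p: "sublinear p" and G: "dominated_graph p G" and a: "a \<notin> fst ` G"
    and d: "\<forall>(x, y) \<in> G. y - p (x - a) \<le> d \<and> d \<le> p (x + a) - y"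
  shows "dominated_graph p {(x + t *\<^sub>R a, y + t * d) | x y t. (x, y) \<in> G}" (is "dominated_graph p ?G'")
proof -
  have sub: "subspace G" and single: "\<And>x y y'. (x, y) \<in> G \<Longrightarrow> (x, y') \<in> G \<Longrightarrow> y = y'"
    using G unfolding dominated_graph_def by auto
  have "?G' = {g + h | g h. g \<in> G \<and> h \<in> span {(a, d)}}"
    unfolding span_singleton by force
  then have "subspace ?G'"
    using subspace_sums[OF sub subspace_span] by simp
  moreover have "y = y'" if xy: "(x, y) \<in> ?G'" and xy': "(x, y') \<in> ?G'" for x y y'
  proof -
    obtain x1 y1 t where 1: "(x1, y1) \<in> G" "x = x1 + t *\<^sub>R a" "y = y1 + t * d"
      using xy by blast
    obtain x2 y2 t' where 2: "(x2, y2) \<in> G" "x = x2 + t' *\<^sub>R a" "y' = y2 + t' * d"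
      using xy' by blast
    have "t = t'" using subspace_graph_shift_unique[OF sub a 1(1) 2(1)] 1(2) 2(2) by simp
    then show ?thesis using 1 2 single by auto
  qed
  moreover have "y \<le> p x" if "(x, y) \<in> ?G'" for x y
    using that dominated_graph_shift_le[OF p G _ d] by blast
  ultimately show ?thesis unfolding dominated_graph_def by blast
qed

lemma dominated_graph_extend:
  assumes "sublinear p" "dominated_graph p G" "a \<notin> fst ` G"
  shows "\<exists>G'. dominated_graph p G' \<and> G \<subset> G'"
proof -
  obtain d where d: "\<forall>(x, y) \<in> G. y - p (x - a) \<le> d \<and> d \<le> p (x + a) - y"
    using dominated_graph_extension_bound[OF assms(1,2)] by blast
  let ?G' = "{(x + t *\<^sub>R a, y + t * d) | x y t. (x, y) \<in> G}"
  have "(x + 0 *\<^sub>R a, y + 0 * d) \<in> ?G'" if "(x, y) \<in> G" for x y using that by blast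
  then have "G \<subseteq> ?G'" by auto
  moreover have "(0, 0) \<in> G" using assms(2) subspace_0[of G] unfolding dominated_graph_def by (simp add: zero_prod_def)
  then have "(0 + 1 *\<^sub>R a, 0 + 1 * d) \<in> ?G'" by blast
  then have "(a, d) \<in> ?G' - G" using assms(3) by force
  ultimately show ?thesis using dominated_graph_extend_by[OF assms d] by blast
qed

lemma dominated_graph_chain_Union:
  assumes "C \<noteq> {}" and chain: "subset.chain {G. dominated_graph p G} C"
  shows "dominated_graph p (\<Union>C)"
proof -
  have common: "\<exists>G\<in>C. A \<subseteq> G" if "finite A" "A \<subseteq> \<Union>C" for A
    using finite_subset_Union_chain[OF that assms] by blast
  have dom: "dominated_graph p G" if "G \<in> C" for G
    using chain that unfolding subset_chain_def by blast
  have "subspace (\<Union>C)"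
    unfolding subspace_def
  proof (intro conjI ballI allI)
    show "0 \<in> \<Union>C" using assms(1) dom subspace_0 unfolding dominated_graph_def by blast
  next
    fix g h assume "g \<in> \<Union>C" "h \<in> \<Union>C"
    then obtain G where "G \<in> C" "g \<in> G" "h \<in> G" using common[of "{g, h}"] by auto
    then show "g + h \<in> \<Union>C" using dom subspace_add unfolding dominated_graph_def by blast
  next
    fix c :: real and g assume "g \<in> \<Union>C"
    then show "c *\<^sub>R g \<in> \<Union>C" using dom subspace_scale unfolding dominated_graph_def by blast
  qed
  moreover have "y = y'" if xy: "(x, y) \<in> \<Union>C" "(x, y') \<in> \<Union>C" for x y y'
  proof -
    obtain G where "G \<in> C" "(x, y) \<in> G" "(x, y') \<in> G" using common[of "{(x, y), (x, y')}"] xy by auto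
    then show ?thesis using dom unfolding dominated_graph_def by blast
  qed
  moreover have "y \<le> p x" if "(x, y) \<in> \<Union>C" for x y
    using that dom unfolding dominated_graph_def by fastforce
  ultimately show ?thesis unfolding dominated_graph_def by blast
qed

lemma dominated_graph_span_singleton:
  assumes p: "sublinear p" and "- p (- u) \<le> c" "c \<le> p u"
  shows "dominated_graph p (span {(u, c)})"
proof -
  have "t * c \<le> p (t *\<^sub>R u)" for t
  proof -
    consider "t = 0" | "t > 0" | "t < 0" by linarith
    then show ?thesis
    proof cases
      case 1 then show ?thesis using sublinear_zero[OF p] by simp
    next
      case 2 then show ?thesis using sublinearD(2)[OF p 2] assms(3) by simp
    next
      case 3
      have "p (t *\<^sub>R u) = (- t) * p (- u)"
        using sublinearD(2)[OF p, of "- t" "- u"] 3 by simp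
      then show ?thesis using mult_left_mono[OF assms(2), of "- t"] 3 by simp
    qed
  qed
  moreover have "t * c = t' * c" if "t *\<^sub>R u = t' *\<^sub>R u" for t t'
  proof (cases "u = 0")
    case True
    then show ?thesis using assms(2,3) sublinear_zero[OF p] by simp
  next
    case False
    then show ?thesis using that by simp
  qed
  ultimately show ?thesis
    using subspace_span[of "{(u, c)}"] unfolding dominated_graph_def span_singleton by auto
qed

theorem hahn_banach:
  fixes p :: "'a::real_vector \<Rightarrow> real"
  assumes p: "sublinear p" and "- p (- u) \<le> c" "c \<le> p u"
  shows "\<exists>f. linear f \<and> f u = c \<and> (\<forall>x. f x \<le> p x)"
proof -
  define A where "A = {G. dominated_graph p G \<and> (u, c) \<in> G}"
  have "span {(u, c)} \<in> A"
    unfolding A_def using dominated_graph_span_singleton[OF assms] span_base by blast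
  moreover have "\<Union>C \<in> A" if "C \<noteq> {}" "subset.chain A C" for C
    using that dominated_graph_chain_Union[of C p] unfolding A_def subset_chain_def by blast
  ultimately obtain M where M: "M \<in> A" and max: "\<And>G. G \<in> A \<Longrightarrow> M \<subseteq> G \<Longrightarrow> G = M"
    using subset_Zorn_nonempty[of A] by blast
  have G: "dominated_graph p M" using M unfolding A_def by blast
  have total: "\<exists>y. (x, y) \<in> M" for x
  proof (rule ccontr)
    assume "\<nexists>y. (x, y) \<in> M"
    then obtain G' where "dominated_graph p G'" "M \<subset> G'"
      using dominated_graph_extend[OF p G, of x] by force
    then show False using max[of G'] M unfolding A_def by blast
  qed
  define f where "f x = (THE y. (x, y) \<in> M)" for x
  have f: "(x, y) \<in> M \<longleftrightarrow> y = f x" for x y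
    using G total[of x] theI[of "\<lambda>y. (x, y) \<in> M"] unfolding f_def dominated_graph_def by metis
  have "subspace M" using G unfolding dominated_graph_def by blast
  then have "linear f"
    by (intro linearI) (use f subspace_add[of M] subspace_scale[of M] in fastforce)+
  moreover have "f u = c" using M f[of u c] unfolding A_def by simp
  moreover have "f x \<le> p x" for x using G f unfolding dominated_graph_def by blast
  ultimately show ?thesis by blast
qed

lemma hahn_banach_norm_bounded:
  fixes p :: "'a::real_normed_vector \<Rightarrow> real"
  assumes "sublinear p" "\<And>x. p x \<le> norm x" "- p (- u) \<le> c" "c \<le> p u"
  shows "\<exists>f. bounded_linear f \<and> f u = c \<and> (\<forall>x. f x \<le> p x) \<and> (\<forall>x. \<bar>f x\<bar> \<le> norm x)"
proof -
  obtain f where f: "linear f" "f u = c" "\<And>x. f x \<le> p x"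
    using hahn_banach[OF assms(1,3,4)] by blast
  have "\<bar>f x\<bar> \<le> norm x" for x
    using f(3)[of x] f(3)[of "- x"] assms(2)[of x] assms(2)[of "- x"] linear_neg[OF f(1)] by simp
  moreover from this have "bounded_linear f"
    using f(1) by (intro bounded_linear_intro[of _ 1]) (auto simp: linear_add linear_scale)
  ultimately show ?thesis using f by blast
qed

lemma sublinear_norm: "sublinear norm"
  unfolding sublinear_def by (simp add: norm_triangle_ineq)

lemma le_infdist: "A \<noteq> {} \<Longrightarrow> (\<And>a. a \<in> A \<Longrightarrow> e \<le> dist x a) \<Longrightarrow> e \<le> infdist x A"
  by (simp add: infdist_notempty cINF_greatest)

lemma sublinear_infdist:
  fixes V :: "'a::real_normed_vector set"
  assumes V: "subspace V"
  shows "sublinear (\<lambda>x. infdist x V)"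
  unfolding sublinear_def
proof (intro conjI allI impI)
  have ne: "V \<noteq> {}" using V subspace_0 by blast
  fix x y :: 'a
  have "infdist (x + y) V - dist y b \<le> dist x a" if "a \<in> V" "b \<in> V" for a b
  proof -
    have "infdist (x + y) V \<le> dist (x + y) (a + b)" using that V by (simp add: infdist_le subspace_add)
    also have "\<dots> \<le> dist x a + dist y b"
      using norm_triangle_ineq[of "x - a" "y - b"] by (simp add: dist_norm algebra_simps)
    finally show ?thesis by simp
  qed
  then have "infdist (x + y) V - dist y b \<le> infdist x V" if "b \<in> V" for b
    using that ne by (intro le_infdist) auto
  then have "infdist (x + y) V - infdist x V \<le> infdist y V"
    using ne by (intro le_infdist) (auto simp: algebra_simps)
  then show "infdist (x + y) V \<le> infdist x V + infdist y V" by simp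
next
  have ne: "V \<noteq> {}" using V subspace_0 by blast
  fix t :: real and x :: 'a assume t: "0 < t"
  have "infdist (t *\<^sub>R x) V / t \<le> dist x a" if "a \<in> V" for a
  proof -
    have "infdist (t *\<^sub>R x) V \<le> dist (t *\<^sub>R x) (t *\<^sub>R a)" using that V by (simp add: infdist_le subspace_scale)
    also have "\<dots> = t * dist x a" using t by (simp add: dist_norm scaleR_diff_right[symmetric])
    finally show ?thesis using t by (simp add: field_simps)
  qed
  then have "infdist (t *\<^sub>R x) V / t \<le> infdist x V" using ne by (intro le_infdist) auto
  moreover have "t * infdist x V \<le> dist (t *\<^sub>R x) b" if "b \<in> V" for b
  proof -
    have "infdist x V \<le> dist x ((1 / t) *\<^sub>R b)" using that V by (simp add: infdist_le subspace_scale)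
    also have "\<dots> = dist (t *\<^sub>R x) b / t"
    proof -
      have "t *\<^sub>R x - b = t *\<^sub>R (x - (1 / t) *\<^sub>R b)" using t by (simp add: algebra_simps)
      then show ?thesis using t by (simp add: dist_norm)
    qed
    finally show ?thesis using t by (simp add: field_simps)
  qed
  then have "t * infdist x V \<le> infdist (t *\<^sub>R x) V" using ne by (intro le_infdist) auto
  ultimately show "infdist (t *\<^sub>R x) V = t * infdist x V" using t by (simp add: field_simps)
qed

lemma norming_functional:
  fixes v :: "'a::real_normed_vector"
  shows "\<exists>f :: 'a \<Rightarrow> real. bounded_linear f \<and> f v = norm v \<and> (\<forall>w. \<bar>f w\<bar> \<le> norm w)"
  using hahn_banach_norm_bounded[OF sublinear_norm, of v "norm v"] by auto

lemma separating_functional: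
  fixes V :: "'a::real_normed_vector set"
  assumes V: "subspace V" "closed V" and u: "u \<notin> V"
  shows "\<exists>f :: 'a \<Rightarrow> real. bounded_linear f \<and> (\<forall>v\<in>V. f v = 0) \<and> f u \<noteq> 0"
proof -
  have "V \<noteq> {}" using V subspace_0 by blast
  have le_norm: "infdist x V \<le> norm x" for x
    using infdist_le[OF subspace_0[OF V(1)], of x] by simp
  obtain f where f: "bounded_linear f" "f u = infdist u V" "\<And>x. f x \<le> infdist x V"
    using hahn_banach_norm_bounded[OF sublinear_infdist[OF V(1)] le_norm, of u "infdist u V"]
      infdist_nonneg[of "- u" V] infdist_nonneg[of u V] by auto
  have "f v = 0" if "v \<in> V" for v
    using f(3)[of v] f(3)[of "- v"] that V(1) subspace_neg[OF V(1)]
      linear_neg[OF bounded_linear.linear[OF f(1)]] by force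
  moreover have "f u \<noteq> 0"
    using f(2) infdist_pos_not_in_closed[OF V(2) \<open>V \<noteq> {}\<close> u] by simp
  ultimately show ?thesis using f(1) by blast
qed

section \<open>A Phillips-type lemma\<close>

lemma suminf_indicator_window:
  fixes r :: "nat \<Rightarrow> real"
  assumes r: "summable (\<lambda>k. \<bar>r k\<bar>)" and B: "B \<inter> {a<..b} = {m}"
  shows "\<bar>(\<Sum>k. indicator B k * r k) - (\<Sum>k\<le>a. indicator B k * r k) - r m\<bar> \<le> (\<Sum>k. \<bar>r (k + Suc b)\<bar>)"
proof -
  let ?g = "\<lambda>k. indicator B k * r k"
  have bound: "\<bar>?g k\<bar> \<le> \<bar>r k\<bar>" for k by (simp add: indicator_def)
  have g: "summable (\<lambda>k. \<bar>?g k\<bar>)" by (rule summable_comparison_test'[OF r]) (simp add: bound)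
  have "m \<in> {a<..b}" using B by blast
  then have split: "{..<Suc b} = {..a} \<union> {a<..b}" by auto
  have "(\<Sum>k<Suc b. ?g k) = (\<Sum>k\<le>a. ?g k) + (\<Sum>k\<in>{a<..b}. ?g k)"
    unfolding split by (rule sum.union_disjoint) auto
  also have "(\<Sum>k\<in>{a<..b}. ?g k) = (\<Sum>k\<in>{a<..b} \<inter> B. r k)"
    unfolding sum.inter_restrict[OF finite_greaterThanAtMost] by (rule sum.cong) (auto simp: indicator_def)
  also have "\<dots> = r m" by (simp add: inf_commute[of "{a<..b}" B] B)
  finally have "(\<Sum>k. ?g k) - (\<Sum>k\<le>a. ?g k) - r m = (\<Sum>k. ?g (k + Suc b))"
    using suminf_split_initial_segment[OF summable_rabs_cancel[OF g], of "Suc b"] by linarith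
  also have "\<bar>\<dots>\<bar> \<le> (\<Sum>k. \<bar>?g (k + Suc b)\<bar>)"
    using summable_ignore_initial_segment[OF g] by (rule summable_rabs)
  also have "\<dots> \<le> (\<Sum>k. \<bar>r (k + Suc b)\<bar>)"
    by (rule suminf_le[OF bound summable_ignore_initial_segment[OF g] summable_ignore_initial_segment[OF r]])
  finally show ?thesis .
qed

lemma suminf_indicator_gap:
  fixes r s :: "nat \<Rightarrow> real"
  assumes r: "summable (\<lambda>k. \<bar>r k\<bar>)" and s: "summable (\<lambda>k. \<bar>s k\<bar>)" and B: "B \<inter> {a<..b} = {m}"
    and hump: "\<epsilon> \<le> \<bar>r m\<bar>" "\<bar>s m\<bar> \<le> \<epsilon> / 8"
    and head: "(\<Sum>k\<le>a. \<bar>r k - s k\<bar>) \<le> \<epsilon> / 8"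
    and tails: "(\<Sum>k. \<bar>r (k + Suc b)\<bar>) \<le> \<epsilon> / 8" "(\<Sum>k. \<bar>s (k + Suc b)\<bar>) \<le> \<epsilon> / 8"
  shows "\<epsilon> / 2 \<le> \<bar>(\<Sum>k. indicator B k * r k) - (\<Sum>k. indicator B k * s k)\<bar>"
proof -
  have "\<bar>(\<Sum>k\<le>a. indicator B k * r k) - (\<Sum>k\<le>a. indicator B k * s k)\<bar> \<le> (\<Sum>k\<le>a. \<bar>r k - s k\<bar>)"
    unfolding sum_subtractf[symmetric]
    by (rule order_trans[OF sum_abs sum_mono]) (simp add: indicator_def)
  moreover have "e / 2 \<le> \<bar>X - Y\<bar>"
    if "\<bar>X - H - R\<bar> \<le> t" "\<bar>Y - K - S\<bar> \<le> t'" "\<bar>H - K\<bar> \<le> e / 8" "e \<le> \<bar>R\<bar>" "\<bar>S\<bar> \<le> e / 8"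
      "t \<le> e / 8" "t' \<le> e / 8" for X Y H K R S t t' e :: real
    using that by arith
  ultimately show ?thesis
    using suminf_indicator_window[OF r B] suminf_indicator_window[OF s B] hump head tails by (meson order_trans)
qed

lemma summable_tail_le:
  fixes r :: "nat \<Rightarrow> real"
  assumes "summable (\<lambda>k. \<bar>r k\<bar>)" "0 < e"
  obtains N where "\<And>n. N \<le> n \<Longrightarrow> (\<Sum>k. \<bar>r (k + n)\<bar>) \<le> e"
proof -
  obtain N where "\<forall>n\<ge>N. norm (\<Sum>k. \<bar>r (k + n)\<bar>) < e"
    using suminf_exist_split[OF assms(2,1)] by blast
  then have "(\<Sum>k. \<bar>r (k + n)\<bar>) \<le> e" if "N \<le> n" for n
    using that by (auto simp: abs_less_iff)
  then show thesis using that by blast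
qed

lemma gliding_hump_step:
  fixes \<rho> :: "nat \<Rightarrow> nat \<Rightarrow> real"
  assumes rows: "\<And>i. summable (\<lambda>k. \<bar>\<rho> i k\<bar>)" and columns: "\<And>k. (\<lambda>i. \<rho> i k) \<longlonglongrightarrow> l k"
    and humps: "\<And>N. \<exists>i\<ge>N. \<epsilon> \<le> \<bar>\<rho> i i\<bar>" and \<epsilon>: "0 < \<epsilon>"
  shows "\<exists>p q M'. M < p \<and> p \<le> q \<and> q \<le> M' \<and> \<epsilon> \<le> \<bar>\<rho> q q\<bar> \<and> \<bar>\<rho> p q\<bar> \<le> \<epsilon> / 8 \<and>
    (\<Sum>k\<le>M. \<bar>\<rho> q k - \<rho> p k\<bar>) \<le> \<epsilon> / 8 \<and>
    (\<Sum>k. \<bar>\<rho> q (k + Suc M')\<bar>) \<le> \<epsilon> / 8 \<and> (\<Sum>k. \<bar>\<rho> p (k + Suc M')\<bar>) \<le> \<epsilon> / 8"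
proof -
  have "(\<lambda>i. \<Sum>k\<le>M. \<bar>\<rho> i k - l k\<bar>) \<longlonglongrightarrow> (\<Sum>k\<le>M. \<bar>l k - l k\<bar>)"
    by (intro tendsto_intros columns)
  from order_tendstoD(2)[OF this[simplified], of "\<epsilon> / 16"] \<epsilon>
  obtain N where N: "\<And>i. i \<ge> N \<Longrightarrow> (\<Sum>k\<le>M. \<bar>\<rho> i k - l k\<bar>) \<le> \<epsilon> / 16"
    by (auto simp: eventually_sequentially intro: less_imp_le)
  define p where "p = max N (Suc M)"
  from order_tendstoD(2)[OF summable_LIMSEQ_zero[OF rows[of p]], of "\<epsilon> / 8"] \<epsilon>
  obtain Q0 where Q0: "\<And>k. k \<ge> Q0 \<Longrightarrow> \<bar>\<rho> p k\<bar> \<le> \<epsilon> / 8"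
    by (auto simp: eventually_sequentially intro: less_imp_le)
  obtain q where q: "q \<ge> max p Q0" "\<epsilon> \<le> \<bar>\<rho> q q\<bar>" using humps by blast
  have "0 < \<epsilon> / 8" using \<epsilon> by simp
  obtain Mq where Mq: "\<And>n. Mq \<le> n \<Longrightarrow> (\<Sum>k. \<bar>\<rho> q (k + n)\<bar>) \<le> \<epsilon> / 8"
    using summable_tail_le[OF rows \<open>0 < \<epsilon> / 8\<close>] by blast
  obtain Mp where Mp: "\<And>n. Mp \<le> n \<Longrightarrow> (\<Sum>k. \<bar>\<rho> p (k + n)\<bar>) \<le> \<epsilon> / 8"
    using summable_tail_le[OF rows \<open>0 < \<epsilon> / 8\<close>] by blast
  have "(\<Sum>k\<le>M. \<bar>\<rho> q k - \<rho> p k\<bar>) \<le> (\<Sum>k\<le>M. \<bar>\<rho> q k - l k\<bar> + \<bar>\<rho> p k - l k\<bar>)"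
    by (intro sum_mono) linarith
  also have "\<dots> \<le> \<epsilon> / 8"
    using N[of p] N[of q] q(1) unfolding sum.distrib p_def by simp
  finally have head: "(\<Sum>k\<le>M. \<bar>\<rho> q k - \<rho> p k\<bar>) \<le> \<epsilon> / 8" .
  define M' where "M' = max q (max Mq Mp)"
  have "M < p" "p \<le> q" "q \<le> M'" "\<bar>\<rho> p q\<bar> \<le> \<epsilon> / 8"
    using q(1) Q0[of q] unfolding p_def M'_def by auto
  moreover have "(\<Sum>k. \<bar>\<rho> q (k + Suc M')\<bar>) \<le> \<epsilon> / 8" "(\<Sum>k. \<bar>\<rho> p (k + Suc M')\<bar>) \<le> \<epsilon> / 8"
    by (rule Mq, simp add: M'_def) (rule Mp, simp add: M'_def)
  ultimately show ?thesis using q(2) head by blast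
qed

lemma suminf_indicator_singleton: "(\<Sum>k'. indicator {k} k' * f k') = (f k :: real)"
proof -
  have "(\<lambda>k'. indicator {k} k' * f k') = (\<lambda>k'. if k' = k then f k' else 0)"
    by (auto simp: indicator_def)
  then show ?thesis using sums_unique[OF sums_single[of k f]] by simp
qed

lemma range_inter_window:
  fixes Ms q :: "nat \<Rightarrow> nat"
  assumes between: "\<And>j. Ms j < q j" "\<And>j. q j \<le> Ms (Suc j)"
  shows "range q \<inter> {Ms j<..Ms (Suc j)} = {q j}"
proof -
  have Ms: "strict_mono Ms" unfolding strict_mono_Suc_iff using between less_le_trans by blast
  have unique: "j' = j" if "Ms j < q j'" "q j' \<le> Ms (Suc j)" for j'
  proof (rule ccontr)
    assume "j' \<noteq> j"
    then consider "Suc j' \<le> j" | "Suc j \<le> j'" by linarith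
    then show False
      using that between[of j'] strict_mono_leD[OF Ms, of "Suc j'" j] strict_mono_leD[OF Ms, of "Suc j" j']
      by cases linarith+
  qed
  show ?thesis
  proof
    show "range q \<inter> {Ms j<..Ms (Suc j)} \<subseteq> {q j}" by (auto dest: unique)
  qed (use between[of j] in auto)
qed

text \<open>A variant of Phillips' lemma, proved by a gliding hump.\<close>
lemma subset_sums_Cauchy_imp_diagonal_tendsto_zero:
  fixes \<rho> :: "nat \<Rightarrow> nat \<Rightarrow> real"
  assumes rows: "\<And>i. summable (\<lambda>k. \<bar>\<rho> i k\<bar>)"
    and Cauchy: "\<And>B. Cauchy (\<lambda>i. \<Sum>k. indicator B k * \<rho> i k)"
  shows "(\<lambda>i. \<rho> i i) \<longlonglongrightarrow> 0"
proof (rule ccontr)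
  assume "\<not> (\<lambda>i. \<rho> i i) \<longlonglongrightarrow> 0"
  then obtain \<epsilon> where \<epsilon>: "0 < \<epsilon>" and humps: "\<And>N. \<exists>i\<ge>N. \<epsilon> \<le> \<bar>\<rho> i i\<bar>"
    unfolding LIMSEQ_iff by (auto simp: not_less)
  have "convergent (\<lambda>i. \<rho> i k)" for k
    using Cauchy[of "{k}"] by (simp add: suminf_indicator_singleton Cauchy_convergent_iff)
  then have columns: "(\<lambda>i. \<rho> i k) \<longlonglongrightarrow> lim (\<lambda>i. \<rho> i k)" for k
    by (simp add: convergent_LIMSEQ_iff)
  define hump where "hump M p q M' \<longleftrightarrow> M < p \<and> p \<le> q \<and> q \<le> M' \<and> \<epsilon> \<le> \<bar>\<rho> q q\<bar> \<and>
    \<bar>\<rho> p q\<bar> \<le> \<epsilon> / 8 \<and> (\<Sum>k\<le>M. \<bar>\<rho> q k - \<rho> p k\<bar>) \<le> \<epsilon> / 8 \<and>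
    (\<Sum>k. \<bar>\<rho> q (k + Suc M')\<bar>) \<le> \<epsilon> / 8 \<and> (\<Sum>k. \<bar>\<rho> p (k + Suc M')\<bar>) \<le> \<epsilon> / 8" for M p q M'
  have "\<forall>M. \<exists>p q M'. hump M p q M'"
    using gliding_hump_step[OF rows columns humps \<epsilon>] unfolding hump_def by blast
  then obtain p q M' where "\<And>M. hump M (p M) (q M) (M' M)" by metis
  then have hump: "M < p M" "p M \<le> q M" "q M \<le> M' M" "\<epsilon> \<le> \<bar>\<rho> (q M) (q M)\<bar>"
    "\<bar>\<rho> (p M) (q M)\<bar> \<le> \<epsilon> / 8" "(\<Sum>k\<le>M. \<bar>\<rho> (q M) k - \<rho> (p M) k\<bar>) \<le> \<epsilon> / 8"
    "(\<Sum>k. \<bar>\<rho> (q M) (k + Suc (M' M))\<bar>) \<le> \<epsilon> / 8" "(\<Sum>k. \<bar>\<rho> (p M) (k + Suc (M' M))\<bar>) \<le> \<epsilon> / 8"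
    for M unfolding hump_def by blast+
  define Ms where "Ms j = (M' ^^ j) 0" for j
  have Ms_Suc: "Ms (Suc j) = M' (Ms j)" for j by (simp add: Ms_def)
  have between: "Ms j < q (Ms j)" "q (Ms j) \<le> Ms (Suc j)" for j
    using hump(1-3)[of "Ms j"] unfolding Ms_Suc by linarith+
  then have Ms: "strict_mono Ms" unfolding strict_mono_Suc_iff using less_le_trans by blast
  define B where "B = range (\<lambda>j. q (Ms j))"
  have window: "B \<inter> {Ms j<..Ms (Suc j)} = {q (Ms j)}" for j
    unfolding B_def using between by (rule range_inter_window)
  define F where "F i = (\<Sum>k. indicator B k * \<rho> i k)" for i
  have gap: "\<epsilon> / 2 \<le> dist (F (q (Ms j))) (F (p (Ms j)))" for j
    using suminf_indicator_gap[OF rows rows window[unfolded Ms_Suc] hump(4,5,6,7,8)] unfolding F_def dist_real_def .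
  obtain N where "\<And>m n. m \<ge> N \<Longrightarrow> n \<ge> N \<Longrightarrow> dist (F m) (F n) < \<epsilon> / 2"
    using Cauchy[of B] \<epsilon> unfolding F_def Cauchy_def by (meson half_gt_zero)
  moreover have "N \<le> p (Ms N)" "N \<le> q (Ms N)"
    using seq_suble[OF Ms, of N] hump(1,2)[of "Ms N"] by linarith+
  ultimately show False using gap[of N] by (meson not_less)
qed

section \<open>The Orlicz--Pettis theorem\<close>

definition weakly_subseries_summable :: "(nat \<Rightarrow> 'a::real_normed_vector) \<Rightarrow> bool" where
  "weakly_subseries_summable z \<longleftrightarrow>
     (\<forall>f::'a \<Rightarrow> real. bounded_linear f \<longrightarrow> summable (\<lambda>j. \<bar>f (z j)\<bar>)) \<and>
     (\<forall>B. \<exists>u. \<forall>f::'a \<Rightarrow> real. bounded_linear f \<longrightarrow> f u = (\<Sum>j. indicator B j * f (z j)))"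

lemma weakly_subseries_summableD:
  fixes z :: "nat \<Rightarrow> 'a::real_normed_vector"
  assumes "weakly_subseries_summable z"
  shows "\<And>f::'a \<Rightarrow> real. bounded_linear f \<Longrightarrow> summable (\<lambda>j. \<bar>f (z j)\<bar>)"
    and "\<exists>u. \<forall>f::'a \<Rightarrow> real. bounded_linear f \<longrightarrow> f u = (\<Sum>j. indicator B j * f (z j))"
  using assms unfolding weakly_subseries_summable_def by blast+

definition unconditionally_Cauchy :: "(nat \<Rightarrow> 'a::real_normed_vector) \<Rightarrow> bool" where
  "unconditionally_Cauchy z \<longleftrightarrow> (\<forall>\<epsilon>>0. \<exists>n. \<forall>G. finite G \<longrightarrow> G \<subseteq> {n..} \<longrightarrow> norm (\<Sum>j\<in>G. z j) < \<epsilon>)"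

lemma summable_indicator_mult:
  fixes a :: "nat \<Rightarrow> real"
  assumes "summable (\<lambda>j. \<bar>a j\<bar>)"
  shows "summable (\<lambda>j. indicator B j * a j)"
  by (rule summable_rabs_cancel, rule summable_comparison_test'[OF assms]) (simp add: indicator_def)

lemma weakly_subseries_summable_subseq:
  fixes z :: "nat \<Rightarrow> 'a::real_normed_vector"
  assumes z: "weakly_subseries_summable z" and s: "strict_mono s"
  shows "weakly_subseries_summable (z \<circ> s)"
  unfolding weakly_subseries_summable_def
proof (intro conjI allI impI)
  fix f :: "'a \<Rightarrow> real" assume f: "bounded_linear f"
  have "summable (\<lambda>n. indicator (range s) n * \<bar>f (z n)\<bar>)"
    using summable_indicator_mult[of "\<lambda>j. \<bar>f (z j)\<bar>"] weakly_subseries_summableD(1)[OF z f] by simp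
  then show "summable (\<lambda>j. \<bar>f ((z \<circ> s) j)\<bar>)"
    using summable_mono_reindex[OF s, of "\<lambda>n. indicator (range s) n * \<bar>f (z n)\<bar>"] by simp
next
  fix B
  obtain u where u: "\<And>f::'a \<Rightarrow> real. bounded_linear f \<Longrightarrow> f u = (\<Sum>j. indicator (s ` B) j * f (z j))"
    using weakly_subseries_summableD(2)[OF z, of "s ` B"] by blast
  have "indicator (s ` B) (s n) = (indicator B n :: real)" for n
    using strict_mono_eq[OF s] by (auto simp: indicator_def)
  moreover have "indicator (s ` B) n * f (z n) = 0" if "n \<notin> range s" for n and f :: "'a \<Rightarrow> real"
    using that by (auto simp: indicator_def)
  ultimately have "f u = (\<Sum>j. indicator B j * f ((z \<circ> s) j))" if "bounded_linear f" for f :: "'a \<Rightarrow> real"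
    using u[OF that] suminf_mono_reindex[OF s, of "\<lambda>n. indicator (s ` B) n * f (z n)"] by simp
  then show "\<exists>u. \<forall>f::'a \<Rightarrow> real. bounded_linear f \<longrightarrow> f u = (\<Sum>j. indicator B j * f ((z \<circ> s) j))"
    by blast
qed

lemma subspace_closure:
  fixes S :: "'a::real_normed_vector set"
  assumes "subspace S"
  shows "subspace (closure S)"
  unfolding subspace_def
proof (intro conjI ballI allI)
  show "0 \<in> closure S" using assms subspace_0 closure_subset by blast
next
  fix x y assume "x \<in> closure S" "y \<in> closure S"
  then obtain a b where "\<And>n. a n \<in> S" "a \<longlonglongrightarrow> x" "\<And>n. b n \<in> S" "b \<longlonglongrightarrow> y"
    unfolding closure_sequential by metis
  then have "\<forall>n. a n + b n \<in> S" "(\<lambda>n. a n + b n) \<longlonglongrightarrow> x + y"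
    using assms by (auto intro: subspace_add tendsto_add)
  then show "x + y \<in> closure S" unfolding closure_sequential by (intro exI[of _ "\<lambda>n. a n + b n"]) simp
next
  fix c :: real and x assume "x \<in> closure S"
  then obtain a where "\<And>n. a n \<in> S" "a \<longlonglongrightarrow> x" unfolding closure_sequential by metis
  then have "\<forall>n. c *\<^sub>R a n \<in> S" "(\<lambda>n. c *\<^sub>R a n) \<longlonglongrightarrow> c *\<^sub>R x"
    using assms by (auto intro: subspace_scale tendsto_scaleR)
  then show "c *\<^sub>R x \<in> closure S" unfolding closure_sequential by (intro exI[of _ "\<lambda>n. c *\<^sub>R a n"]) simp
qed

lemma weak_subseries_sum_in_closure_span:
  fixes z :: "nat \<Rightarrow> 'a::real_normed_vector"
  assumes u: "\<And>f::'a \<Rightarrow> real. bounded_linear f \<Longrightarrow> f u = (\<Sum>j. indicator B j * f (z j))"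
  shows "u \<in> closure (span (range z))"
proof (rule ccontr)
  assume "u \<notin> closure (span (range z))"
  then obtain f :: "'a \<Rightarrow> real" where f: "bounded_linear f" "f u \<noteq> 0"
    and zero: "\<And>v. v \<in> closure (span (range z)) \<Longrightarrow> f v = 0"
    using separating_functional[OF subspace_closure[OF subspace_span] closed_closure] by blast
  have "f (z j) = 0" for j
    using zero span_base[of "z j" "range z"] closure_subset by blast
  then show False using u[OF f(1)] f(2) by simp
qed

lemma bounded_columns_convergent_subseq:
  fixes a :: "nat \<Rightarrow> nat \<Rightarrow> real"
  assumes "\<And>k. bounded (range (\<lambda>i. a i k))"
  obtains d where "strict_mono d" "\<And>k. convergent (\<lambda>i. a (d i) k)"
proof -
  interpret subseqs "\<lambda>k \<sigma>. convergent (\<lambda>i. a (\<sigma> i) k)"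
  proof
    fix k and \<sigma> :: "nat \<Rightarrow> nat"
    have "bounded (range (\<lambda>i. a (\<sigma> i) k))" by (rule bounded_subset[OF assms]) auto
    then show "\<exists>r. strict_mono r \<and> convergent (\<lambda>i. a ((\<sigma> \<circ> r) i) k)"
      using bounded_imp_convergent_subsequence by (fastforce simp: convergent_def o_def)
  qed
  have "convergent (\<lambda>i. a (diagseq i) k)" for k
  proof -
    have "convergent (\<lambda>i. a ((diagseq \<circ> (+) (Suc k)) i) k)"
    proof (rule diagseq_holds)
      fix r s :: "nat \<Rightarrow> nat" and n assume "strict_mono r" "convergent (\<lambda>i. a (s i) n)"
      from convergent_subseq_convergent[OF this(2,1)] show "convergent (\<lambda>i. a ((s \<circ> r) i) n)"
        by (simp add: o_def)
    qed
    then have "convergent (\<lambda>i. a (diagseq (i + Suc k)) k)" by (simp add: o_def add.commute)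
    then show ?thesis using convergent_ignore_initial_segment[of "\<lambda>i. a (diagseq i) k" "Suc k"] by simp
  qed
  then show thesis using that subseq_diagseq by blast
qed

lemma convergent_on_span:
  assumes "\<And>i. linear (g i)" "\<And>x. x \<in> S \<Longrightarrow> convergent (\<lambda>i. g i x :: real)" "x \<in> span S"
  shows "convergent (\<lambda>i. g i x)"
proof (rule span_induct[OF assms(3)])
  show "subspace {x. convergent (\<lambda>i. g i x)}"
    unfolding subspace_def using assms(1)
    by (auto simp: linear_0 linear_add linear_scale intro: convergent_add convergent_mult convergent_const)
qed (use assms(2) in simp)

lemma convergent_on_closure:
  fixes g :: "nat \<Rightarrow> 'a::real_normed_vector \<Rightarrow> real"
  assumes "\<And>i. linear (g i)" "\<And>i x. \<bar>g i x\<bar> \<le> norm x"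
    and "\<And>x. x \<in> S \<Longrightarrow> convergent (\<lambda>i. g i x)" and x: "x \<in> closure S"
  shows "convergent (\<lambda>i. g i x)"
  unfolding Cauchy_convergent_iff[symmetric]
proof (rule metric_CauchyI)
  fix e :: real assume "0 < e"
  then obtain y where y: "y \<in> S" "dist y x < e / 3"
    using x unfolding closure_approachable by (metis zero_less_divide_iff zero_less_numeral)
  obtain M where M: "\<And>m n. m \<ge> M \<Longrightarrow> n \<ge> M \<Longrightarrow> dist (g m y) (g n y) < e / 3"
    using assms(3)[OF y(1)] \<open>0 < e\<close> unfolding Cauchy_convergent_iff[symmetric] Cauchy_def
    by (metis zero_less_divide_iff zero_less_numeral)
  have close: "\<bar>g i x - g i y\<bar> < e / 3" for i
    using assms(2)[of i "x - y"] y(2) linear_diff[OF assms(1)] by (simp add: dist_norm norm_minus_commute)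
  show "\<exists>M. \<forall>m\<ge>M. \<forall>n\<ge>M. dist (g m x) (g n x) < e"
  proof (intro exI allI impI)
    fix m n assume "M \<le> m" "M \<le> n"
    then have "\<bar>g m y - g n y\<bar> < e / 3" using M by (simp add: dist_real_def)
    then show "dist (g m x) (g n x) < e" using close[of m] close[of n] unfolding dist_real_def by arith
  qed
qed

lemma not_tendsto_zero_imp_subseq:
  fixes z :: "nat \<Rightarrow> 'a::real_normed_vector"
  assumes "\<not> z \<longlonglongrightarrow> 0"
  obtains \<epsilon> and s :: "nat \<Rightarrow> nat" where "0 < \<epsilon>" "strict_mono s" "\<And>i. \<epsilon> \<le> norm (z (s i))"
proof -
  obtain \<epsilon> where "0 < \<epsilon>" and "infinite {n. \<epsilon> \<le> norm (z n)}"
    using assms unfolding LIMSEQ_iff infinite_nat_iff_unbounded_le by (auto simp: not_less)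
  moreover obtain s :: "nat \<Rightarrow> nat" where "strict_mono s" "\<And>i. s i \<in> {n. \<epsilon> \<le> norm (z n)}"
    using infinite_enumerate[OF calculation(2)] by blast
  ultimately show thesis using that by blast
qed

text \<open>Norming functionals of a subsequence bounded away
  from 0, made pointwise convergent on its closed span by a diagonal argument, form a matrix to which
  the Phillips-type lemma applies; its diagonal consists of the norms of the subsequence.\<close>
lemma weakly_subseries_summable_tendsto_zero:
  fixes z :: "nat \<Rightarrow> 'a::real_normed_vector"
  assumes z: "weakly_subseries_summable z"
  shows "z \<longlonglongrightarrow> 0"
proof (rule ccontr)
  assume "\<not> z \<longlonglongrightarrow> 0"
  then obtain \<epsilon> and s :: "nat \<Rightarrow> nat" where "0 < \<epsilon>" "strict_mono s" and large: "\<And>i. \<epsilon> \<le> norm (z (s i))"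
    by (rule not_tendsto_zero_imp_subseq) auto
  define w where "w = z \<circ> s"
  have w: "weakly_subseries_summable w" unfolding w_def using z \<open>strict_mono s\<close> by (rule weakly_subseries_summable_subseq)
  have "\<forall>i. \<exists>f::'a \<Rightarrow> real. bounded_linear f \<and> f (w i) = norm (w i) \<and> (\<forall>x. \<bar>f x\<bar> \<le> norm x)"
    using norming_functional by blast
  then obtain g :: "nat \<Rightarrow> 'a \<Rightarrow> real" where "\<forall>i. bounded_linear (g i) \<and> g i (w i) = norm (w i) \<and> (\<forall>x. \<bar>g i x\<bar> \<le> norm x)"
    by (rule choice_iff[THEN iffD1, elim_format]) blast
  then have g: "\<And>i. bounded_linear (g i)" "\<And>i. g i (w i) = norm (w i)" "\<And>i x. \<bar>g i x\<bar> \<le> norm x"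
    by blast+
  have bdd: "bounded (range (\<lambda>i. g i (w k)))" for k
    using g(3) by (intro boundedI[of _ "norm (w k)"]) auto
  obtain d where d: "strict_mono d" and conv: "\<And>k. convergent (\<lambda>i. g (d i) (w k))"
    using bounded_columns_convergent_subseq[of "\<lambda>i k. g i (w k)", OF bdd] by blast
  have lin: "linear (g (d i))" for i using g(1) bounded_linear.linear by blast
  have conv_span: "convergent (\<lambda>i. g (d i) x)" if "x \<in> span (range w)" for x
    by (rule convergent_on_span[OF lin _ that]) (use conv in auto)
  have conv_closure: "convergent (\<lambda>i. g (d i) x)" if "x \<in> closure (span (range w))" for x
    by (rule convergent_on_closure[OF lin g(3) conv_span that])
  define \<rho> where "\<rho> i k = g (d i) (w (d k))" for i k
  have wd: "weakly_subseries_summable (w \<circ> d)" using w d by (rule weakly_subseries_summable_subseq)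
  have Cauchy: "Cauchy (\<lambda>i. \<Sum>k. indicator B k * \<rho> i k)" for B
  proof -
    obtain u where u: "\<And>f::'a \<Rightarrow> real. bounded_linear f \<Longrightarrow> f u = (\<Sum>j. indicator B j * f ((w \<circ> d) j))"
      using weakly_subseries_summableD(2)[OF wd] by blast
    have "closure (span (range (w \<circ> d))) \<subseteq> closure (span (range w))"
      by (intro closure_mono span_mono) auto
    then have "convergent (\<lambda>i. g (d i) u)"
      using conv_closure weak_subseries_sum_in_closure_span[where z="w \<circ> d", OF u] by blast
    then show ?thesis using u[OF g(1)] convergent_Cauchy by (simp add: \<rho>_def)
  qed
  have rows: "summable (\<lambda>k. \<bar>\<rho> i k\<bar>)" for i
    using weakly_subseries_summableD(1)[OF wd g(1)] by (simp add: \<rho>_def)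
  have "(\<lambda>i. \<rho> i i) \<longlonglongrightarrow> 0" by (rule subset_sums_Cauchy_imp_diagonal_tendsto_zero[OF rows Cauchy])
  moreover have "\<epsilon> \<le> \<rho> i i" for i using g(2) large unfolding \<rho>_def w_def by simp
  ultimately have "\<epsilon> \<le> 0" by (intro LIMSEQ_le_const) auto
  then show False using \<open>0 < \<epsilon>\<close> by simp
qed

lemma interval_blocks:
  fixes G :: "nat \<Rightarrow> nat \<Rightarrow> nat set"
  assumes "\<And>k n. finite (G k n)" "\<And>k n. G k n \<noteq> {}" "\<And>k n. G k n \<subseteq> {n..}"
  obtains nb where "strict_mono nb" "nb 0 = 0" "\<And>k. G k (nb k) \<subseteq> {nb k..<nb (Suc k)}"
proof -
  define nb where "nb = rec_nat 0 (\<lambda>k m. Suc (Max (G k m)))"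
  have nb_Suc: "nb (Suc k) = Suc (Max (G k (nb k)))" for k by (simp add: nb_def)
  have blocks: "G k (nb k) \<subseteq> {nb k..<nb (Suc k)}" for k
  proof
    fix j assume "j \<in> G k (nb k)"
    then show "j \<in> {nb k..<nb (Suc k)}"
      using assms(3)[of k "nb k"] Max_ge[OF assms(1)[of k "nb k"], of j] by (auto simp: nb_Suc)
  qed
  have "nb k < nb (Suc k)" for k
  proof -
    obtain j where "j \<in> G k (nb k)" using assms(2) by blast
    then show ?thesis using blocks[of k] by auto
  qed
  then have "strict_mono nb" by (simp add: strict_mono_Suc_iff)
  moreover have "nb 0 = 0" by (simp add: nb_def)
  ultimately show thesis using that blocks by blast
qed

lemma interval_blocks_disjoint:
  assumes "strict_mono nb" "j \<in> {nb k..<nb (Suc k)}" "j \<in> {nb k'..<nb (Suc k')}"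
  shows "k = k'"
proof (rule ccontr)
  assume "k \<noteq> k'"
  then consider "Suc k \<le> k'" | "Suc k' \<le> k" by linarith
  then show False
    using assms strict_mono_leD[OF assms(1), of "Suc k" k'] strict_mono_leD[OF assms(1), of "Suc k'" k]
    by cases auto
qed

lemma sums_interval_blocks:
  fixes a :: "nat \<Rightarrow> real"
  assumes nb: "strict_mono nb" "nb 0 = 0" and a: "summable a"
  shows "(\<lambda>k. \<Sum>j\<in>{nb k..<nb (Suc k)}. a j) sums suminf a"
proof -
  have "(\<Sum>k<K. \<Sum>j\<in>{nb k..<nb (Suc k)}. a j) = (\<Sum>j<nb K. a j)" for K
  proof (induction K)
    case (Suc K)
    then show ?case
      using sum.atLeastLessThan_concat[OF _ strict_mono_leD[OF nb(1)], of 0 K "Suc K" a]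
      by (simp add: atLeast0LessThan)
  qed (simp add: nb(2))
  then show ?thesis
    using LIMSEQ_subseq_LIMSEQ[OF summable_LIMSEQ[OF a] nb(1)] by (simp add: sums_def o_def)
qed

lemma sum_interval_indicator_UNION:
  fixes a :: "nat \<Rightarrow> real"
  assumes nb: "strict_mono nb" and G: "\<And>k. G k \<subseteq> {nb k..<nb (Suc k)}"
  shows "(\<Sum>j\<in>{nb k..<nb (Suc k)}. indicator (\<Union>k\<in>B. G k) j * a j) = indicator B k * (\<Sum>j\<in>G k. a j)"
proof -
  have member: "(\<exists>k'\<in>B. j \<in> G k') \<longleftrightarrow> k \<in> B \<and> j \<in> G k" if "j \<in> {nb k..<nb (Suc k)}" for j
    using that G interval_blocks_disjoint[OF nb, of j k] by blast
  have "(\<Sum>j\<in>{nb k..<nb (Suc k)}. indicator (\<Union>k\<in>B. G k) j * a j) =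
      (\<Sum>j\<in>{nb k..<nb (Suc k)}. if k \<in> B \<and> j \<in> G k then a j else 0)"
    by (rule sum.cong) (simp_all add: member indicator_def)
  also have "\<dots> = indicator B k * (\<Sum>j\<in>G k. a j)"
    by (cases "k \<in> B") (simp_all add: sum.inter_restrict[symmetric] Int_absorb1[OF G])
  finally show ?thesis .
qed

lemma weakly_subseries_summable_block_sums:
  fixes z :: "nat \<Rightarrow> 'a::real_normed_vector"
  assumes z: "weakly_subseries_summable z" and nb: "strict_mono nb" "nb 0 = 0"
    and G: "\<And>k. G k \<subseteq> {nb k..<nb (Suc k)}"
  shows "weakly_subseries_summable (\<lambda>k. \<Sum>j\<in>G k. z j)"
  unfolding weakly_subseries_summable_def
proof (intro conjI allI impI)
  fix f :: "'a \<Rightarrow> real" assume f: "bounded_linear f"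
  have bound: "\<bar>f (\<Sum>j\<in>G k. z j)\<bar> \<le> (\<Sum>j\<in>{nb k..<nb (Suc k)}. \<bar>f (z j)\<bar>)" for k
  proof -
    have "\<bar>f (\<Sum>j\<in>G k. z j)\<bar> \<le> (\<Sum>j\<in>G k. \<bar>f (z j)\<bar>)"
      by (simp add: linear_sum[OF bounded_linear.linear[OF f]])
    also have "\<dots> \<le> (\<Sum>j\<in>{nb k..<nb (Suc k)}. \<bar>f (z j)\<bar>)"
      by (rule sum_mono2[OF _ G]) auto
    finally show ?thesis .
  qed
  show "summable (\<lambda>k. \<bar>f (\<Sum>j\<in>G k. z j)\<bar>)"
    using sums_summable[OF sums_interval_blocks[OF nb weakly_subseries_summableD(1)[OF z f]]]
    by (rule summable_comparison_test') (simp add: bound)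
next
  fix B
  define U where "U = (\<Union>k\<in>B. G k)"
  obtain u where u: "\<And>f::'a \<Rightarrow> real. bounded_linear f \<Longrightarrow> f u = (\<Sum>j. indicator U j * f (z j))"
    using weakly_subseries_summableD(2)[OF z] by blast
  note block = sum_interval_indicator_UNION[OF nb(1) G, of B, folded U_def]
  have "f u = (\<Sum>k. indicator B k * f (\<Sum>j\<in>G k. z j))" if f: "bounded_linear f" for f :: "'a \<Rightarrow> real"
  proof -
    have "f u = (\<Sum>k. \<Sum>j\<in>{nb k..<nb (Suc k)}. indicator U j * f (z j))"
      using u[OF f] sums_unique[OF sums_interval_blocks[OF nb summable_indicator_mult[OF weakly_subseries_summableD(1)[OF z f]]]]
      by simp
    also have "\<dots> = (\<Sum>k. indicator B k * f (\<Sum>j\<in>G k. z j))"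
      by (simp only: block linear_sum[OF bounded_linear.linear[OF f]])
    finally show ?thesis .
  qed
  then show "\<exists>u. \<forall>f::'a \<Rightarrow> real. bounded_linear f \<longrightarrow> f u = (\<Sum>k. indicator B k * f (\<Sum>j\<in>G k. z j))"
    by blast
qed

lemma weakly_subseries_summable_imp_unconditionally_Cauchy:
  fixes z :: "nat \<Rightarrow> 'a::real_normed_vector"
  assumes z: "weakly_subseries_summable z"
  shows "unconditionally_Cauchy z"
  unfolding unconditionally_Cauchy_def
proof (intro allI impI, rule ccontr)
  fix \<epsilon> :: real assume "0 < \<epsilon>" "\<not> (\<exists>n. \<forall>G. finite G \<longrightarrow> G \<subseteq> {n..} \<longrightarrow> norm (sum z G) < \<epsilon>)"
  then have "\<forall>n. \<exists>G. finite G \<and> G \<subseteq> {n..} \<and> \<epsilon> \<le> norm (sum z G)" by (meson not_less)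
  from choice[OF this] obtain H where H: "\<And>n. finite (H n)" "\<And>n. H n \<subseteq> {n..}" "\<And>n. \<epsilon> \<le> norm (sum z (H n))"
    by blast
  have "H n \<noteq> {}" for n using H(3)[of n] \<open>0 < \<epsilon>\<close> by force
  then obtain nb where nb: "strict_mono nb" "nb 0 = 0" "\<And>k. H (nb k) \<subseteq> {nb k..<nb (Suc k)}"
    using interval_blocks[of "\<lambda>_. H"] H(1,2) by metis
  have "(\<lambda>k. \<Sum>j\<in>H (nb k). z j) \<longlonglongrightarrow> 0"
    by (rule weakly_subseries_summable_tendsto_zero[OF weakly_subseries_summable_block_sums[where G = "\<lambda>k. H (nb k)", OF z nb]])
  then obtain k where "norm (\<Sum>j\<in>H (nb k). z j) < \<epsilon>"
    using \<open>0 < \<epsilon>\<close> by (auto simp: LIMSEQ_iff)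
  then show False using H(3)[of "nb k"] by simp
qed

lemma sum_abs_scaleR_split:
  fixes v :: "nat \<Rightarrow> 'a::real_vector"
  assumes "finite G"
  shows "(\<Sum>j\<in>G. \<bar>x j\<bar> *\<^sub>R v j) = (\<Sum>j\<in>G \<inter> {j. 0 \<le> x j}. x j *\<^sub>R v j) - (\<Sum>j\<in>G - {j. 0 \<le> x j}. x j *\<^sub>R v j)"
proof -
  have "(\<Sum>j\<in>G. \<bar>x j\<bar> *\<^sub>R v j) = (\<Sum>j\<in>G \<inter> {j. 0 \<le> x j}. \<bar>x j\<bar> *\<^sub>R v j) + (\<Sum>j\<in>G - {j. 0 \<le> x j}. \<bar>x j\<bar> *\<^sub>R v j)"
    using sum.Int_Diff[OF assms] by blast
  also have "\<dots> = (\<Sum>j\<in>G \<inter> {j. 0 \<le> x j}. x j *\<^sub>R v j) - (\<Sum>j\<in>G - {j. 0 \<le> x j}. x j *\<^sub>R v j)"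
    by (simp add: sum_negf[symmetric])
  finally show ?thesis .
qed

lemma unconditionally_Cauchy_abs:
  fixes v :: "nat \<Rightarrow> 'a::real_normed_vector"
  assumes "unconditionally_Cauchy (\<lambda>j. x j *\<^sub>R v j)"
  shows "unconditionally_Cauchy (\<lambda>j. \<bar>x j\<bar> *\<^sub>R v j)"
  unfolding unconditionally_Cauchy_def
proof (intro allI impI)
  fix \<epsilon> :: real assume "0 < \<epsilon>"
  then obtain n where n: "\<And>G. finite G \<Longrightarrow> G \<subseteq> {n..} \<Longrightarrow> norm (\<Sum>j\<in>G. x j *\<^sub>R v j) < \<epsilon> / 2"
    using assms unfolding unconditionally_Cauchy_def by (meson half_gt_zero)
  have "norm (\<Sum>j\<in>G. \<bar>x j\<bar> *\<^sub>R v j) < \<epsilon>" if "finite G" "G \<subseteq> {n..}" for G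
    using n[of "G \<inter> {j. 0 \<le> x j}"] n[of "G - {j. 0 \<le> x j}"] that
      norm_triangle_ineq4[of "\<Sum>j\<in>G \<inter> {j. 0 \<le> x j}. x j *\<^sub>R v j" "\<Sum>j\<in>G - {j. 0 \<le> x j}. x j *\<^sub>R v j"]
    unfolding sum_abs_scaleR_split[OF that(1)] by fastforce
  then show "\<exists>n. \<forall>G. finite G \<longrightarrow> G \<subseteq> {n..} \<longrightarrow> norm (\<Sum>j\<in>G. \<bar>x j\<bar> *\<^sub>R v j) < \<epsilon>" by blast
qed

lemma unconditionally_Cauchy_bounded_linear:
  assumes "unconditionally_Cauchy z" "bounded_linear f"
  shows "unconditionally_Cauchy (\<lambda>j. f (z j))"
  unfolding unconditionally_Cauchy_def
proof (intro allI impI)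
  fix \<epsilon> :: real assume "0 < \<epsilon>"
  obtain K where K: "0 < K" "\<And>x. norm (f x) \<le> norm x * K"
    using bounded_linear.pos_bounded[OF assms(2)] by blast
  obtain n where n: "\<And>G. finite G \<Longrightarrow> G \<subseteq> {n..} \<Longrightarrow> norm (sum z G) < \<epsilon> / K"
    using assms(1) \<open>0 < \<epsilon>\<close> K(1) unfolding unconditionally_Cauchy_def by (meson divide_pos_pos)
  have "norm (\<Sum>j\<in>G. f (z j)) < \<epsilon>" if "finite G" "G \<subseteq> {n..}" for G
    using K(2)[of "sum z G"] n[OF that] K(1)
    by (simp add: linear_sum[OF bounded_linear.linear[OF assms(2)]] pos_less_divide_eq)
  then show "\<exists>n. \<forall>G. finite G \<longrightarrow> G \<subseteq> {n..} \<longrightarrow> norm (\<Sum>j\<in>G. f (z j)) < \<epsilon>" by blast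
qed

lemma unconditionally_Cauchy_indicator:
  assumes "unconditionally_Cauchy z"
  shows "unconditionally_Cauchy (\<lambda>j. indicator B j *\<^sub>R z j)"
  using assms unfolding unconditionally_Cauchy_def
  by (simp add: indicator_scaleR_eq_if sum.inter_restrict[symmetric]) (meson Int_lower1 finite_Int order_trans)

lemma unconditionally_Cauchy_imp_summable:
  fixes z :: "nat \<Rightarrow> 'a::banach"
  assumes "unconditionally_Cauchy z"
  shows "summable z"
  unfolding summable_Cauchy
proof (intro allI impI)
  fix e :: real assume "0 < e"
  then obtain N where "\<And>G. finite G \<Longrightarrow> G \<subseteq> {N..} \<Longrightarrow> norm (sum z G) < e"
    using assms unfolding unconditionally_Cauchy_def by blast
  moreover have "{m..<n} \<subseteq> {N..}" if "N \<le> m" for m n using that by auto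
  ultimately show "\<exists>N. \<forall>m\<ge>N. \<forall>n. norm (sum z {m..<n}) < e" by blast
qed

lemma unconditionally_Cauchy_imp_weakly_subseries_summable:
  fixes z :: "nat \<Rightarrow> 'a::banach"
  assumes z: "unconditionally_Cauchy z"
  shows "weakly_subseries_summable z"
  unfolding weakly_subseries_summable_def
proof (intro conjI allI impI)
  fix f :: "'a \<Rightarrow> real" assume "bounded_linear f"
  then have "unconditionally_Cauchy (\<lambda>j. f (z j) *\<^sub>R (1::real))"
    using unconditionally_Cauchy_bounded_linear[OF z] by simp
  then have "unconditionally_Cauchy (\<lambda>j. \<bar>f (z j)\<bar> *\<^sub>R (1::real))"
    by (rule unconditionally_Cauchy_abs)
  then show "summable (\<lambda>j. \<bar>f (z j)\<bar>)"
    using unconditionally_Cauchy_imp_summable by fastforce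
next
  fix B
  have "summable (\<lambda>j. indicator B j *\<^sub>R z j)"
    by (rule unconditionally_Cauchy_imp_summable[OF unconditionally_Cauchy_indicator[OF z]])
  then have "f (\<Sum>j. indicator B j *\<^sub>R z j) = (\<Sum>j. indicator B j * f (z j))" if "bounded_linear f" for f :: "'a \<Rightarrow> real"
    using bounded_linear.suminf[OF that] linear_scale[OF bounded_linear.linear[OF that]] by simp
  then show "\<exists>u. \<forall>f::'a \<Rightarrow> real. bounded_linear f \<longrightarrow> f u = (\<Sum>j. indicator B j * f (z j))" by blast
qed

theorem orlicz_pettis:
  fixes z :: "nat \<Rightarrow> 'a::banach"
  shows "weakly_subseries_summable z \<longleftrightarrow> unconditionally_Cauchy z"
  using weakly_subseries_summable_imp_unconditionally_Cauchy unconditionally_Cauchy_imp_weakly_subseries_summable by blast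

section \<open>Integrability with respect to \<open>m\<^sub>T\<close>\<close>

lemma integrable_var_meas_iff:
  fixes T :: "(nat \<Rightarrow> real) \<Rightarrow> 'e::real_normed_vector"
  assumes f: "bounded_linear f"
  shows "integrable (var_meas T f) x \<longleftrightarrow> summable (\<lambda>j. \<bar>f (x j *\<^sub>R T (unitseq j))\<bar>)"
proof -
  have "integrable (var_meas T f) x \<longleftrightarrow> integrable (count_space UNIV) (\<lambda>j. \<bar>f (T (unitseq j))\<bar> *\<^sub>R x j)"
    unfolding var_meas_def by (rule integrable_density) auto
  also have "\<dots> \<longleftrightarrow> summable (\<lambda>j. norm (\<bar>f (T (unitseq j))\<bar> *\<^sub>R x j))"
    by (rule integrable_count_space_nat_iff)
  finally show ?thesis
    by (simp add: linear_scale[OF bounded_linear.linear[OF f]] abs_mult mult.commute)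
qed

lemma scal_int_eq_suminf:
  fixes T :: "(nat \<Rightarrow> real) \<Rightarrow> 'e::real_normed_vector"
  assumes f: "bounded_linear f" and x: "summable (\<lambda>j. \<bar>f (x j *\<^sub>R T (unitseq j))\<bar>)"
  shows "scal_int T f A x = (\<Sum>j. indicator A j * f (x j *\<^sub>R T (unitseq j)))"
proof -
  have "summable (\<lambda>j. norm (indicator A j * f (x j *\<^sub>R T (unitseq j))))"
    by (rule summable_comparison_test'[OF x]) (simp add: indicator_def)
  then have "integrable (count_space UNIV) (\<lambda>j. indicator A j * f (x j *\<^sub>R T (unitseq j)))"
    by (simp add: integrable_count_space_nat_iff)
  then show ?thesis
    unfolding scal_int_def by (simp add: linear_scale[OF bounded_linear.linear[OF f]] integral_count_space_nat)
qed

lemma mem_ell1_mT: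
  "x \<in> ell1_mT T \<longleftrightarrow> (\<forall>f. bounded_linear f \<longrightarrow> integrable (var_meas T f) x) \<and>
     (\<forall>A. \<exists>v. \<forall>f. bounded_linear f \<longrightarrow> f v = scal_int T f A x)"
  unfolding ell1_mT_def by (rule mem_Collect_eq)

lemma ell1_mT_summable:
  fixes T :: "(nat \<Rightarrow> real) \<Rightarrow> 'e::real_normed_vector" and f :: "'e \<Rightarrow> real"
  assumes "x \<in> ell1_mT T" "bounded_linear f"
  shows "summable (\<lambda>j. \<bar>f (x j *\<^sub>R T (unitseq j))\<bar>)"
  using assms integrable_var_meas_iff[OF assms(2)] unfolding mem_ell1_mT by blast

lemma ell1_mT_iff_weakly_subseries_summable:
  fixes T :: "(nat \<Rightarrow> real) \<Rightarrow> 'e::real_normed_vector"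
  shows "x \<in> ell1_mT T \<longleftrightarrow> weakly_subseries_summable (\<lambda>j. x j *\<^sub>R T (unitseq j))"
proof
  assume mem: "x \<in> ell1_mT T"
  have "\<exists>u. \<forall>f::'e \<Rightarrow> real. bounded_linear f \<longrightarrow> f u = (\<Sum>j. indicator A j * f (x j *\<^sub>R T (unitseq j)))" for A
  proof -
    have "\<exists>v. \<forall>f::'e \<Rightarrow> real. bounded_linear f \<longrightarrow> f v = scal_int T f A x"
      using mem unfolding mem_ell1_mT by blast
    then obtain v where v: "\<forall>f::'e \<Rightarrow> real. bounded_linear f \<longrightarrow> f v = scal_int T f A x" ..
    have "f v = (\<Sum>j. indicator A j * f (x j *\<^sub>R T (unitseq j)))" if f: "bounded_linear f" for f :: "'e \<Rightarrow> real"
      using v[rule_format, OF f] scal_int_eq_suminf[OF f ell1_mT_summable[OF mem f]] by simp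
    then show ?thesis by blast
  qed
  then show "weakly_subseries_summable (\<lambda>j. x j *\<^sub>R T (unitseq j))"
    using ell1_mT_summable[OF mem] unfolding weakly_subseries_summable_def by blast
next
  assume w: "weakly_subseries_summable (\<lambda>j. x j *\<^sub>R T (unitseq j))"
  note S = weakly_subseries_summableD(1)[OF w]
  have "integrable (var_meas T f) x" if "bounded_linear f" for f :: "'e \<Rightarrow> real"
    using integrable_var_meas_iff[OF that] S[OF that] by simp
  moreover have "\<exists>v. \<forall>f::'e \<Rightarrow> real. bounded_linear f \<longrightarrow> f v = scal_int T f A x" for A
  proof -
    obtain u where u: "\<forall>f::'e \<Rightarrow> real. bounded_linear f \<longrightarrow> f u = (\<Sum>j. indicator A j * f (x j *\<^sub>R T (unitseq j)))"
      using weakly_subseries_summableD(2)[OF w] by blast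
    have "f u = scal_int T f A x" if f: "bounded_linear f" for f :: "'e \<Rightarrow> real"
      using u[rule_format, OF f] scal_int_eq_suminf[OF f S[OF f]] by simp
    then show ?thesis by blast
  qed
  ultimately show "x \<in> ell1_mT T" unfolding mem_ell1_mT by blast
qed

corollary ell1_mT_iff_unconditionally_Cauchy:
  fixes T :: "(nat \<Rightarrow> real) \<Rightarrow> 'e::banach"
  shows "x \<in> ell1_mT T \<longleftrightarrow> unconditionally_Cauchy (\<lambda>j. x j *\<^sub>R T (unitseq j))"
  by (simp add: ell1_mT_iff_weakly_subseries_summable orlicz_pettis)

section \<open>Power domination\<close>

definition subset_sums_sup :: "((nat \<Rightarrow> real) \<Rightarrow> 'e::real_normed_vector) \<Rightarrow> nat set \<Rightarrow> (nat \<Rightarrow> real) \<Rightarrow> real" where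
  "subset_sums_sup T F x = (SUP N\<in>Pow F. norm (\<Sum>j\<in>N. x j *\<^sub>R T (unitseq j)))"

lemma subset_sums_sup_upper:
  "finite F \<Longrightarrow> N \<subseteq> F \<Longrightarrow> norm (\<Sum>j\<in>N. x j *\<^sub>R T (unitseq j)) \<le> subset_sums_sup T F x"
  unfolding subset_sums_sup_def by (intro cSUP_upper) (auto intro!: bdd_above_finite)

lemma subset_sums_sup_least:
  "(\<And>N. N \<subseteq> F \<Longrightarrow> norm (\<Sum>j\<in>N. x j *\<^sub>R T (unitseq j)) \<le> b) \<Longrightarrow> subset_sums_sup T F x \<le> b"
  unfolding subset_sums_sup_def by (intro cSUP_least) auto

lemma r_power_dominated_iff:
  "r_power_dominated T r \<longleftrightarrow> (\<exists>C>0. \<forall>F x. finite F \<longrightarrow> (\<forall>j\<in>F. 0 \<le> x j) \<longrightarrow>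
     norm (\<Sum>j\<in>F. (x j powr r) *\<^sub>R T (unitseq j)) powr (1 / r) \<le> C * subset_sums_sup T F x)"
  unfolding r_power_dominated_def subset_sums_sup_def ..

lemma r_power_dominated_unconditionally_Cauchy:
  fixes T :: "(nat \<Rightarrow> real) \<Rightarrow> 'e::real_normed_vector"
  assumes dom: "r_power_dominated T r" and r: "0 < r" and y: "\<And>j. 0 \<le> y j"
    and Cauchy: "unconditionally_Cauchy (\<lambda>j. y j *\<^sub>R T (unitseq j))"
  shows "unconditionally_Cauchy (\<lambda>j. (y j powr r) *\<^sub>R T (unitseq j))"
  unfolding unconditionally_Cauchy_def
proof (intro allI impI)
  fix \<delta> :: real assume "0 < \<delta>"
  obtain C where C: "0 < C" and dom_C: "\<And>F x. finite F \<Longrightarrow> \<forall>j\<in>F. 0 \<le> x j \<Longrightarrow>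
      norm (\<Sum>j\<in>F. (x j powr r) *\<^sub>R T (unitseq j)) powr (1 / r) \<le> C * subset_sums_sup T F x"
    using dom unfolding r_power_dominated_iff by blast
  define \<epsilon> where "\<epsilon> = (\<delta> / 2) powr (1 / r) / C"
  have "0 < \<epsilon>" using \<open>0 < \<delta>\<close> C by (simp add: \<epsilon>_def)
  then obtain n where n: "\<And>G. finite G \<Longrightarrow> G \<subseteq> {n..} \<Longrightarrow> norm (\<Sum>j\<in>G. y j *\<^sub>R T (unitseq j)) < \<epsilon>"
    using Cauchy unfolding unconditionally_Cauchy_def by blast
  have "norm (\<Sum>j\<in>G. (y j powr r) *\<^sub>R T (unitseq j)) < \<delta>" if G: "finite G" "G \<subseteq> {n..}" for G
  proof -
    define a where "a = norm (\<Sum>j\<in>G. (y j powr r) *\<^sub>R T (unitseq j))"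
    have "a powr (1 / r) \<le> C * subset_sums_sup T G y" unfolding a_def using y by (intro dom_C[OF G(1)]) auto
    also have "\<dots> \<le> C * \<epsilon>"
      using n G C by (intro mult_left_mono subset_sums_sup_least less_imp_le) (auto intro: finite_subset)
    also have "C * \<epsilon> = (\<delta> / 2) powr (1 / r)" using C by (simp add: \<epsilon>_def)
    finally have le: "a powr (1 / r) \<le> (\<delta> / 2) powr (1 / r)" .
    have "a = (a powr (1 / r)) powr r" using r by (simp add: a_def powr_powr)
    also have "\<dots> \<le> ((\<delta> / 2) powr (1 / r)) powr r"
      by (rule powr_mono2) (use r le in auto)
    also have "\<dots> = \<delta> / 2" using r \<open>0 < \<delta>\<close> by (simp add: powr_powr)
    finally show ?thesis using \<open>0 < \<delta>\<close> by (simp add: a_def)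
  qed
  then show "\<exists>n. \<forall>G. finite G \<longrightarrow> G \<subseteq> {n..} \<longrightarrow> norm (\<Sum>j\<in>G. (y j powr r) *\<^sub>R T (unitseq j)) < \<delta>"
    by blast
qed

lemma power_dominated_imp_ell1_subset_ellr:
  fixes T :: "(nat \<Rightarrow> real) \<Rightarrow> 'e::banach"
  assumes "r_power_dominated T r" and "0 < r"
  shows "ell1_mT T \<subseteq> ellr_mT T r"
proof
  fix x assume "x \<in> ell1_mT T"
  then have "unconditionally_Cauchy (\<lambda>j. \<bar>x j\<bar> *\<^sub>R T (unitseq j))"
    by (intro unconditionally_Cauchy_abs) (simp add: ell1_mT_iff_unconditionally_Cauchy)
  then have "unconditionally_Cauchy (\<lambda>j. (\<bar>x j\<bar> powr r) *\<^sub>R T (unitseq j))"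
    using r_power_dominated_unconditionally_Cauchy[OF assms] by simp
  then show "x \<in> ellr_mT T r"
    by (simp add: ellr_mT_def ell1_mT_iff_unconditionally_Cauchy)
qed

lemma subset_sums_sup_pos:
  assumes F: "finite F" and r: "0 < r" and t: "\<And>j. T (unitseq j) \<noteq> 0"
    and nonzero: "(\<Sum>j\<in>F. (x j powr r) *\<^sub>R T (unitseq j)) \<noteq> 0"
  shows "0 < subset_sums_sup T F x"
proof (rule ccontr)
  assume "\<not> 0 < subset_sums_sup T F x"
  with subset_sums_sup_upper[OF F, of "{}" x T] have zero: "subset_sums_sup T F x = 0" by simp
  have "x j = 0" if "j \<in> F" for j
    using subset_sums_sup_upper[OF F, of "{j}" x T] zero t[of j] that by (simp add: mult_le_0_iff)
  then show False using nonzero r by (simp add: sum.neutral)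
qed

lemma norm_powr_sum_le_head_tail:
  fixes t :: "nat \<Rightarrow> 'e::real_normed_vector"
  assumes F: "finite F" and r: "0 < r" and x: "\<And>j. j \<in> F \<Longrightarrow> 0 \<le> x j"
    and S: "\<And>j. j \<in> F \<Longrightarrow> x j * norm (t j) \<le> S" and t: "\<And>j. t j \<noteq> 0"
  shows "norm (\<Sum>j\<in>F. (x j powr r) *\<^sub>R t j)
    \<le> S powr r * (\<Sum>j<n. norm (t j) powr (1 - r)) + norm (\<Sum>j\<in>F - {..<n}. (x j powr r) *\<^sub>R t j)"
proof -
  have "norm ((x j powr r) *\<^sub>R t j) \<le> S powr r * norm (t j) powr (1 - r)" if j: "j \<in> F" for j
  proof -
    have "x j powr r \<le> (S / norm (t j)) powr r"
      using r x[OF j] S[OF j] t[of j] by (intro powr_mono2) (auto simp: field_simps)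
    then have "x j powr r * norm (t j) \<le> (S / norm (t j)) powr r * norm (t j)"
      by (simp add: mult_right_mono)
    also have "\<dots> = S powr r * norm (t j) powr (1 - r)"
      using t[of j] by (simp add: powr_divide powr_diff)
    finally show ?thesis by simp
  qed
  then have "norm (\<Sum>j\<in>F \<inter> {..<n}. (x j powr r) *\<^sub>R t j) \<le> (\<Sum>j\<in>F \<inter> {..<n}. S powr r * norm (t j) powr (1 - r))"
    by (intro order_trans[OF norm_sum sum_mono]) auto
  also have "\<dots> \<le> S powr r * (\<Sum>j<n. norm (t j) powr (1 - r))"
    unfolding sum_distrib_left[symmetric] by (intro mult_left_mono sum_mono2) auto
  finally show ?thesis
    using norm_triangle_ineq[of "\<Sum>j\<in>F \<inter> {..<n}. (x j powr r) *\<^sub>R t j" "\<Sum>j\<in>F - {..<n}. (x j powr r) *\<^sub>R t j"]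
    unfolding sum.Int_Diff[OF F, of _ "{..<n}"] by linarith
qed

lemma rescaled_block:
  fixes t :: "nat \<Rightarrow> 'e::real_normed_vector"
  assumes x: "\<And>j. j \<in> F \<Longrightarrow> 0 \<le> x j" and S: "0 < S" "\<And>N. N \<subseteq> F \<Longrightarrow> norm (\<Sum>j\<in>N. x j *\<^sub>R t j) \<le> S"
    and big: "(S / \<delta>) powr r \<le> norm (\<Sum>j\<in>F. (x j powr r) *\<^sub>R t j)" and \<delta>: "0 < \<delta>"
  shows "\<exists>y. (\<forall>j. 0 \<le> y j) \<and> (\<forall>j. j \<notin> F \<longrightarrow> y j = 0) \<and>
    (\<forall>N\<subseteq>F. norm (\<Sum>j\<in>N. y j *\<^sub>R t j) \<le> \<delta>) \<and> 1 \<le> norm (\<Sum>j\<in>F. (y j powr r) *\<^sub>R t j)"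
proof (intro exI conjI allI impI)
  define c where "c = \<delta> / S"
  have c: "0 < c" using S \<delta> by (simp add: c_def)
  show "0 \<le> (if j \<in> F then c * x j else 0)" for j using x c by simp
  show "(if j \<in> F then c * x j else 0) = 0" if "j \<notin> F" for j using that by simp
  show "norm (\<Sum>j\<in>N. (if j \<in> F then c * x j else 0) *\<^sub>R t j) \<le> \<delta>" if N: "N \<subseteq> F" for N
  proof -
    have "(\<Sum>j\<in>N. (if j \<in> F then c * x j else 0) *\<^sub>R t j) = c *\<^sub>R (\<Sum>j\<in>N. x j *\<^sub>R t j)"
      using N by (auto simp: scaleR_sum_right intro!: sum.cong)
    then show ?thesis
      using mult_left_mono[OF S(2)[OF N], of c] c S \<delta> by (simp add: c_def)
  qed
  have "(\<Sum>j\<in>F. ((if j \<in> F then c * x j else 0) powr r) *\<^sub>R t j) = c powr r *\<^sub>R (\<Sum>j\<in>F. (x j powr r) *\<^sub>R t j)"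
    by (auto simp: scaleR_sum_right powr_mult intro!: sum.cong)
  moreover have "1 = c powr r * (S / \<delta>) powr r"
    using S \<delta> by (simp add: c_def flip: powr_mult)
  ultimately show "1 \<le> norm (\<Sum>j\<in>F. ((if j \<in> F then c * x j else 0) powr r) *\<^sub>R t j)"
    using mult_left_mono[OF big, of "c powr r"] by simp
qed

lemma not_power_dominated_imp_block:
  fixes T :: "(nat \<Rightarrow> real) \<Rightarrow> 'e::real_normed_vector"
  assumes nd: "\<not> r_power_dominated T r" and r: "0 < r" and t: "\<And>j. T (unitseq j) \<noteq> 0" and \<delta>: "0 < \<delta>"
  shows "\<exists>F y. finite F \<and> F \<subseteq> {n..} \<and> (\<forall>j. 0 \<le> y j) \<and> (\<forall>j. j \<notin> F \<longrightarrow> y j = 0) \<and>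
    (\<forall>N\<subseteq>F. norm (\<Sum>j\<in>N. y j *\<^sub>R T (unitseq j)) \<le> \<delta>) \<and>
    1 \<le> norm (\<Sum>j\<in>F. (y j powr r) *\<^sub>R T (unitseq j))"
proof -
  txt \<open>The coordinates below \<open>n\<close> contribute at most \<open>S powr r * K\<close>, so a violation of domination
    with constant \<open>D powr (1 / r)\<close> leaves a mass \<open>(S / \<delta>) powr r\<close> beyond \<open>n\<close>.\<close>
  define K where "K = (\<Sum>j<n. norm (T (unitseq j)) powr (1 - r))"
  define D where "D = K + \<delta> powr (- r)"
  have "0 < D" using \<delta> by (simp add: D_def K_def add_nonneg_pos sum_nonneg)
  then have "0 < D powr (1 / r)" by simp
  then have "\<not> (\<forall>F x. finite F \<longrightarrow> (\<forall>j\<in>F. 0 \<le> x j) \<longrightarrow>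
      norm (\<Sum>j\<in>F. (x j powr r) *\<^sub>R T (unitseq j)) powr (1 / r) \<le> D powr (1 / r) * subset_sums_sup T F x)"
    using nd unfolding r_power_dominated_iff by blast
  then obtain F x where F: "finite F" and x: "\<forall>j\<in>F. 0 \<le> x j"
    and violated: "D powr (1 / r) * subset_sums_sup T F x < norm (\<Sum>j\<in>F. (x j powr r) *\<^sub>R T (unitseq j)) powr (1 / r)"
    by (auto simp: not_le)
  define S where "S = subset_sums_sup T F x"
  define a where "a = norm (\<Sum>j\<in>F. (x j powr r) *\<^sub>R T (unitseq j))"
  have sub: "norm (\<Sum>j\<in>N. x j *\<^sub>R T (unitseq j)) \<le> S" if "N \<subseteq> F" for N
    unfolding S_def by (rule subset_sums_sup_upper[OF F that])
  have "(\<Sum>j\<in>F. (x j powr r) *\<^sub>R T (unitseq j)) \<noteq> 0"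
  proof
    assume "(\<Sum>j\<in>F. (x j powr r) *\<^sub>R T (unitseq j)) = 0"
    then show False
      using violated \<open>0 < D powr (1 / r)\<close> subset_sums_sup_upper[OF F, of "{}" x T]
      by (simp add: mult_less_0_iff)
  qed
  then have "0 < S" unfolding S_def by (rule subset_sums_sup_pos[where T = T, OF F r t])
  have "(D powr (1 / r) * S) powr r < (a powr (1 / r)) powr r"
    using violated \<open>0 < S\<close> \<open>0 < D\<close> r by (intro powr_less_mono2) (auto simp: a_def S_def)
  then have "D * S powr r < a" using \<open>0 < D\<close> r by (simp add: powr_mult powr_powr a_def)
  moreover have "a \<le> S powr r * K + norm (\<Sum>j\<in>F - {..<n}. (x j powr r) *\<^sub>R T (unitseq j))"
    unfolding a_def K_def using x sub[of "{_}"] by (intro norm_powr_sum_le_head_tail[OF F r _ _ t]) auto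
  moreover have "D * S powr r = S powr r * K + (S / \<delta>) powr r"
    by (simp add: D_def powr_mult inverse_powr powr_minus divide_inverse algebra_simps)
  ultimately have tail: "(S / \<delta>) powr r \<le> norm (\<Sum>j\<in>F - {..<n}. (x j powr r) *\<^sub>R T (unitseq j))"
    by linarith
  have x_tail: "\<And>j. j \<in> F - {..<n} \<Longrightarrow> 0 \<le> x j"
    and sub_tail: "\<And>N. N \<subseteq> F - {..<n} \<Longrightarrow> norm (\<Sum>j\<in>N. x j *\<^sub>R T (unitseq j)) \<le> S"
    using x sub by auto
  have "finite (F - {..<n})" "F - {..<n} \<subseteq> {n..}" using F by auto
  then show ?thesis
    using rescaled_block[where t = "\<lambda>j. T (unitseq j)", OF x_tail \<open>0 < S\<close> sub_tail tail \<delta>] by blast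
qed

lemma sum_half_powers_from_le: "(\<Sum>k\<le>M. if K \<le> k then (1 / 2 :: real) ^ k else 0) \<le> 2 * (1 / 2) ^ K"
proof -
  have "(\<Sum>k\<le>M. if K \<le> k then (1 / 2 :: real) ^ k else 0) = (\<Sum>k=K..M. (1 / 2) ^ k)"
    by (simp add: sum.inter_filter[symmetric]) (rule sum.cong; auto)
  also have "\<dots> \<le> 2 * (1 / 2) ^ K"
    using sum_gp[of "1 / 2 :: real" K M] by (cases "M < K") simp_all
  finally show ?thesis .
qed

lemma block_series_unconditionally_Cauchy:
  fixes t :: "nat \<Rightarrow> 'e::real_normed_vector" and y :: "nat \<Rightarrow> nat \<Rightarrow> real"
  assumes nb: "strict_mono nb" and supp: "\<And>k j. y k j \<noteq> 0 \<Longrightarrow> j \<in> {nb k..<nb (Suc k)}"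
    and small: "\<And>k N. finite N \<Longrightarrow> norm (\<Sum>j\<in>N. y k j *\<^sub>R t j) \<le> (1 / 2) ^ k"
  shows "unconditionally_Cauchy (\<lambda>j. (\<Sum>k\<le>j. y k j) *\<^sub>R t j)"
  unfolding unconditionally_Cauchy_def
proof (intro allI impI)
  fix \<epsilon> :: real assume "0 < \<epsilon>"
  obtain K where K: "(1 / 2 :: real) ^ K < \<epsilon> / 2"
    using real_arch_pow_inv[of "\<epsilon> / 2" "1 / 2"] \<open>0 < \<epsilon>\<close> by auto
  have "norm (\<Sum>j\<in>G. (\<Sum>k\<le>j. y k j) *\<^sub>R t j) < \<epsilon>" if G: "finite G" "G \<subseteq> {nb K..}" for G
  proof -
    define M where "M = Max (insert 0 G)"
    have "y k j = 0" if "j < k" for j k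
      using supp[of k j] seq_suble[OF nb, of k] that by fastforce
    then have "(\<Sum>k\<le>j. y k j) = (\<Sum>k\<le>M. y k j)" if "j \<in> G" for j
      using that G(1) by (intro sum.mono_neutral_left) (auto simp: M_def)
    then have "(\<Sum>j\<in>G. (\<Sum>k\<le>j. y k j) *\<^sub>R t j) = (\<Sum>k\<le>M. \<Sum>j\<in>G. y k j *\<^sub>R t j)"
      by (simp add: scaleR_sum_left sum.swap[of _ G])
    then have "norm (\<Sum>j\<in>G. (\<Sum>k\<le>j. y k j) *\<^sub>R t j) \<le> (\<Sum>k\<le>M. norm (\<Sum>j\<in>G. y k j *\<^sub>R t j))"
      by (simp add: norm_sum)
    also have "\<dots> \<le> (\<Sum>k\<le>M. if K \<le> k then (1 / 2) ^ k else 0)"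
    proof (rule sum_mono)
      fix k
      have "y k j = 0" if "k < K" "j \<in> G" for j
        using supp[of k j] strict_mono_leD[OF nb, of "Suc k" K] G(2) that by fastforce
      then show "norm (\<Sum>j\<in>G. y k j *\<^sub>R t j) \<le> (if K \<le> k then (1 / 2) ^ k else 0)"
        using small[OF G(1), of k] by auto
    qed
    also have "\<dots> < \<epsilon>" using sum_half_powers_from_le[of K M] K by linarith
    finally show ?thesis .
  qed
  then show "\<exists>n. \<forall>G. finite G \<longrightarrow> G \<subseteq> {n..} \<longrightarrow> norm (\<Sum>j\<in>G. (\<Sum>k\<le>j. y k j) *\<^sub>R t j) < \<epsilon>"
    by blast
qed

lemma not_power_dominated_imp_blocks:
  fixes T :: "(nat \<Rightarrow> real) \<Rightarrow> 'e::real_normed_vector"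
  assumes nd: "\<not> r_power_dominated T r" and r: "0 < r" and t: "\<And>j. T (unitseq j) \<noteq> 0"
  obtains nb y where "strict_mono nb" "\<forall>k j. y k j \<noteq> 0 \<longrightarrow> j \<in> {nb k..<nb (Suc k)}"
    "\<forall>k N. finite N \<longrightarrow> norm (\<Sum>j\<in>N. y k j *\<^sub>R T (unitseq j)) \<le> (1 / 2) ^ k" "\<forall>k j. 0 \<le> y k j"
    "\<forall>k. 1 \<le> norm (\<Sum>j\<in>{nb k..<nb (Suc k)}. (y k j powr r) *\<^sub>R T (unitseq j))"
proof -
  define block where "block k n F y \<longleftrightarrow> finite F \<and> F \<subseteq> {n..} \<and> (\<forall>j. 0 \<le> y j) \<and>
    (\<forall>j. j \<notin> F \<longrightarrow> y j = 0) \<and> (\<forall>N\<subseteq>F. norm (\<Sum>j\<in>N. y j *\<^sub>R T (unitseq j)) \<le> (1 / 2) ^ k) \<and>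
    1 \<le> norm (\<Sum>j\<in>F. (y j powr r) *\<^sub>R T (unitseq j))" for k n F and y :: "nat \<Rightarrow> real"
  have "\<forall>k n. \<exists>F y. block k n F y"
    unfolding block_def using not_power_dominated_imp_block[OF nd r t] by simp
  then obtain Fb yb where "\<And>k n. block k n (Fb k n) (yb k n)" by metis
  then have Fb: "\<forall>k n. finite (Fb k n) \<and> Fb k n \<subseteq> {n..}"
    and yb: "\<forall>k n j. 0 \<le> yb k n j \<and> (j \<notin> Fb k n \<longrightarrow> yb k n j = 0)"
      "\<forall>k n N. N \<subseteq> Fb k n \<longrightarrow> norm (\<Sum>j\<in>N. yb k n j *\<^sub>R T (unitseq j)) \<le> (1 / 2) ^ k"
      "\<forall>k n. 1 \<le> norm (\<Sum>j\<in>Fb k n. (yb k n j powr r) *\<^sub>R T (unitseq j))"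
    unfolding block_def by blast+
  have "Fb k n \<noteq> {}" for k n
  proof
    assume "Fb k n = {}"
    with yb(3)[rule_format, of k n] show False by simp
  qed
  then obtain nb where nb: "strict_mono nb" "\<And>k. Fb k (nb k) \<subseteq> {nb k..<nb (Suc k)}"
    using interval_blocks[of Fb] Fb by metis
  define y where "y k = yb k (nb k)" for k
  have outside: "(\<Sum>j\<in>A. f j) = (\<Sum>j\<in>A \<inter> Fb k (nb k). f j)"
    if "finite A" "\<And>j. j \<notin> Fb k (nb k) \<Longrightarrow> f j = 0" for A k and f :: "nat \<Rightarrow> 'e"
    using that by (intro sum.mono_neutral_right) auto
  have small: "norm (\<Sum>j\<in>N. y k j *\<^sub>R T (unitseq j)) \<le> (1 / 2) ^ k" if "finite N" for k N
    using outside[OF that, of k] yb(1,2) by (simp add: y_def)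
  have big: "1 \<le> norm (\<Sum>j\<in>{nb k..<nb (Suc k)}. (y k j powr r) *\<^sub>R T (unitseq j))" for k
    using outside[of "{nb k..<nb (Suc k)}" k] yb(1,3) nb(2)[of k] r by (simp add: y_def Int_absorb1)
  have supp: "j \<in> {nb k..<nb (Suc k)}" if "y k j \<noteq> 0" for k j
    using yb(1) nb(2) that unfolding y_def by blast
  have nonneg: "0 \<le> y k j" for k j using yb(1) by (simp add: y_def)
  show thesis
  proof (rule that[OF nb(1)])
    show "\<forall>k j. y k j \<noteq> 0 \<longrightarrow> j \<in> {nb k..<nb (Suc k)}" using supp by blast
    show "\<forall>k N. finite N \<longrightarrow> norm (\<Sum>j\<in>N. y k j *\<^sub>R T (unitseq j)) \<le> (1 / 2) ^ k" using small by blast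
  qed (use nonneg big in blast)+
qed

lemma ell1_subset_ellr_imp_power_dominated:
  fixes T :: "(nat \<Rightarrow> real) \<Rightarrow> 'e::banach"
  assumes incl: "ell1_mT T \<subseteq> ellr_mT T r" and r: "0 < r" and t: "\<And>j. T (unitseq j) \<noteq> 0"
  shows "r_power_dominated T r"
proof (rule ccontr)
  assume nd: "\<not> r_power_dominated T r"
  obtain nb y where nb: "strict_mono nb" and supp: "\<forall>k j. y k j \<noteq> 0 \<longrightarrow> j \<in> {nb k..<nb (Suc k)}"
    and small: "\<forall>k N. finite N \<longrightarrow> norm (\<Sum>j\<in>N. y k j *\<^sub>R T (unitseq j)) \<le> (1 / 2) ^ k"
    and nonneg: "\<forall>k j. 0 \<le> y k j"
    and big: "\<forall>k. 1 \<le> norm (\<Sum>j\<in>{nb k..<nb (Suc k)}. (y k j powr r) *\<^sub>R T (unitseq j))"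
    by (rule not_power_dominated_imp_blocks[OF nd r t])
  txt \<open>Since \<open>y k\<close> vanishes below \<open>nb k \<ge> k\<close>, this finite sum is \<open>\<Sum>k. y k j\<close>.\<close>
  define X where "X j = (\<Sum>k\<le>j. y k j)" for j
  have "unconditionally_Cauchy (\<lambda>j. X j *\<^sub>R T (unitseq j))"
    unfolding X_def using supp small
    by (intro block_series_unconditionally_Cauchy[where t = "\<lambda>j. T (unitseq j)", OF nb]) auto
  then have "X \<in> ellr_mT T r" using incl by (simp add: ell1_mT_iff_unconditionally_Cauchy subset_iff)
  then have "unconditionally_Cauchy (\<lambda>j. (\<bar>X j\<bar> powr r) *\<^sub>R T (unitseq j))"
    by (simp add: ellr_mT_def ell1_mT_iff_unconditionally_Cauchy)
  then obtain n where n: "\<And>G. finite G \<Longrightarrow> G \<subseteq> {n..} \<Longrightarrow> norm (\<Sum>j\<in>G. (\<bar>X j\<bar> powr r) *\<^sub>R T (unitseq j)) < 1"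
    unfolding unconditionally_Cauchy_def by (meson zero_less_one)
  have "X j = y n j" if j: "j \<in> {nb n..<nb (Suc n)}" for j
  proof -
    have "y k j = 0" if "k \<noteq> n" for k
      using supp j interval_blocks_disjoint[OF nb, of j k n] that by blast
    moreover have "n \<le> j" using j seq_suble[OF nb, of n] by simp
    ultimately show ?thesis unfolding X_def by (subst sum.remove[of _ n]) auto
  qed
  then have "(\<Sum>j\<in>{nb n..<nb (Suc n)}. (\<bar>X j\<bar> powr r) *\<^sub>R T (unitseq j)) =
      (\<Sum>j\<in>{nb n..<nb (Suc n)}. (y n j powr r) *\<^sub>R T (unitseq j))"
    using nonneg by (intro sum.cong) auto
  moreover have "{nb n..<nb (Suc n)} \<subseteq> {n..}" using seq_suble[OF nb, of n] by auto
  ultimately have "norm (\<Sum>j\<in>{nb n..<nb (Suc n)}. (y n j powr r) *\<^sub>R T (unitseq j)) < 1"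
    using n[of "{nb n..<nb (Suc n)}"] by simp
  then show False using big by (simp add: not_less[symmetric])
qed

text \<open>Only the vectors \<open>T (unitseq j)\<close> enter the statement.\<close>
theorem lemma7p4:
  fixes T :: "(nat \<Rightarrow> real) \<Rightarrow> 'e::banach" and r :: real
  assumes "bounded_linear_on_ell1 T"
    and "\<And>n. T (unitseq n) \<noteq> 0"
    and "0 < r"
  shows "ell1_mT T \<subseteq> ellr_mT T r \<longleftrightarrow> r_power_dominated T r"
proof
  assume "ell1_mT T \<subseteq> ellr_mT T r"
  then show "r_power_dominated T r" using assms(3,2) by (rule ell1_subset_ellr_imp_power_dominated)
next
  assume "r_power_dominated T r"
  then show "ell1_mT T \<subseteq> ellr_mT T r" using assms(3) by (rule power_dominated_imp_ell1_subset_ellr)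
qed

end
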